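(* Assume $r_k\ge4/7$ for all $k\ge2$, $\kappa\ge\|f'\|_{C[-\beta,\beta]}$, $\|\phi^0\|_\infty\le\beta$, and $$\tau_1\le\min\Big\{\Big(\frac{4}{11\varsigma m(\kappa+4\varepsilon^2/h^2)\Gamma(2-\alpha)}\Big)^{1/\alpha},\Big(\frac{4}{11\kappa(1-\varsigma)m\Gamma(2-\alpha)}\Big)^{1/\alpha}\Big\}.$$ Then the (balanced) $L2$-$1_\sigma$-sESAV scheme is energy-stable without further time-step size restriction: $\mathcal E_h[\phi^n,R^n]\le\mathcal E_h[\phi^0,R^0]$ for all $n\ge1$.
   Context: Setting: $\Omega=(0,L)^2$ with periodic boundary conditions; constants $m>0$, $\varepsilon>0$, $\alpha\in(0,1)$, and $\varsigma:=\alpha/2$. The nonlinearity $f=-F'$ is one of: (double-well) $F(\phi)=\frac14(1-\phi^2)^2$, $f(\phi)=\phi-\phi^3$, with $\beta=1$; or (Flory–Huggins) $F(\phi)=\frac{\theta}{2}[(1+\phi)\ln(1+\phi)+(1-\phi)\ln(1-\phi)]-\frac{\theta_c}{2}\phi^2$, $f(\phi)=\frac{\theta}{2}\ln\frac{1-\phi}{1+\phi}+\theta_c\phi$ on $(-1,1)$, with $\theta_c>\theta>0$ and $\beta\in(0,1)$ the positive root of $f$. In both cases $f(\pm\beta)=0$. Spatial discretization: $M\in\mathbb N$, $h=L/M$; $\mathbb V_h$ is the space of real grid functions $v=\{v_{ij}\}_{i,j\in\mathbb Z}$ that are $M$-periodic in each index; $\langle v,w\rangle=h^2\sum_{i,j=1}^Mv_{ij}w_{ij}$,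 $\|v\|=\sqrt{\langle v,v\rangle}$, $\|v\|_\infty=\max_{1\le i,j\le M}|v_{ij}|$; $\Delta_hv_{ij}=h^{-2}(v_{i+1,j}+v_{i-1,j}+v_{i,j+1}+v_{i,j-1}-4v_{ij})$; $\nabla_hv_{ij}=\big(\frac{v_{i+1,j}-v_{ij}}h,\frac{v_{i,j+1}-v_{ij}}h\big)$ and $\|\nabla_hv\|^2=h^2\sum_{i,j=1}^M|\nabla_hv_{ij}|^2$. Scalar functions act on grid functions pointwise. $E_{1h}[v]=\langle F(v),1\rangle$ and $g_h(v,w)=\exp(w)/\exp(E_{1h}[v])$ for $v\in\mathbb V_h$ (with $\|v\|_\infty<1$ in the Flory–Huggins case) and $w\in\mathbb R$. The discrete modified energy is $\mathcal E_h[\phi,R]=\frac{\varepsilon^2}{2}\|\nabla_h\phi\|^2+R$. Auxiliary functional: $V:\mathbb R\to\mathbb R$ satisfies (A1) $V\in C^1(\mathbb R)\cap W^{2,\infty}(\mathbb R)$, $V(1)=1$, $V'(1)=0$, $|V'|\le K_1$; (A2) $0\le V\le K_2$ for a constant $K_2>0$; (A3) $|z_1-1|\le|z_2-1|$ implies $|V(z_1)-1|\le|V(z_2)-1|$. Time grid: $0=t_0<t_1<\dots<t_N=T$, $\tau_k=t_k-t_{k-1}$, $r_k=\tau_k/\tau_{k-1}$ ($k\ge2$), $\nabla_\tau v^k=v^k-v^{k-1}$, $\mathbb D_\tau v^k=\nabla_\tau v^k/\tau_k$, $\omega_\mu(t)=t^{\mu-1}/\Gamma(\mu)$. Constant $\kappa\ge0$;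 data $\phi^0\in\mathbb V_h$, $R^0\in\mathbb R$. For $n\ge2$ the predicted solution is $\hat\phi^n=\min\{\max\{(1+r_n)\phi^{n-1}-r_n\phi^{n-2},-\beta\},\beta\}$ (pointwise). $L2$-$1_\sigma$ discretization: $t_{k-\varsigma}=(1-\varsigma)t_k+\varsigma t_{k-1}$, $t_{k-1/2}=(t_k+t_{k-1})/2$; $a^{(n)}_{n-k}=\frac1{\tau_k}\int_{t_{k-1}}^{\min\{t_k,t_{n-\varsigma}\}}\omega_{1-\alpha}(t_{n-\varsigma}-s)\,ds$ ($1\le k\le n$), $b^{(n)}_{n-k}=\frac{2}{\tau_k(\tau_k+\tau_{k+1})}\int_{t_{k-1}}^{t_k}(s-t_{k-1/2})\omega_{1-\alpha}(t_{n-\varsigma}-s)\,ds$ ($1\le k\le n-1$); $B^{(1)}_0=a^{(1)}_0$, and for $n\ge2$: $B^{(n)}_0=a^{(n)}_0+b^{(n)}_1/r_n$, $B^{(n)}_{n-k}=a^{(n)}_{n-k}+b^{(n)}_{n-k+1}/r_k-b^{(n)}_{n-k}$ for $2\le k\le n-1$, $B^{(n)}_{n-1}=a^{(n)}_{n-1}-b^{(n)}_{n-1}$; $\tilde{\mathbb D}^\alpha_\tau v^n=\sum_{k=1}^nB^{(n)}_{n-k}\nabla_\tau v^k$; $w^{k-\varsigma}=(1-\varsigma)w^k+\varsigma w^{k-1}$. Balanced $L2$-$1_\sigma$-sESAV scheme: $\hat\phi^1\in\mathbb V_h$ with $\|\hat\phi^1\|_\infty\le\beta$ solves $B^{(1)}_0(\hat\phi^1-\phi^0)=m(\varepsilon^2\Delta_h\hat\phi^{1-\varsigma}+f(\hat\phi^{1-\varsigma}))$;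 for $n\ge2$, $\hat\phi^n$ is the predicted solution above. For $n\ge1$ set $\hat\phi^{n-\varsigma}=(1-\varsigma)\hat\phi^n+\varsigma\phi^{n-1}$ and $V^{n-\varsigma}=V(g_h(\hat\phi^{n-\varsigma},R^{n-1}))$, and define $(\phi^n,R^n)$ by $\tilde{\mathbb D}^\alpha_\tau\phi^n=m(\varepsilon^2\Delta_h\phi^{n-\varsigma}+V^{n-\varsigma}f(\hat\phi^{n-\varsigma})-\kappa V^{n-\varsigma}(\phi^{n-\varsigma}-\hat\phi^{n-\varsigma}))$ and $\mathbb D_\tau R^n=V^{n-\varsigma}\langle-f(\hat\phi^{n-\varsigma})+\kappa(\phi^{n-\varsigma}-\hat\phi^{n-\varsigma}),\mathbb D_\tau\phi^n\rangle$. *)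

theory Defs
  imports "HOL-Analysis.Analysis"
begin

datatype nonlin = DoubleWell | FloryHuggins real real

fun nl_valid :: "nonlin \<Rightarrow> bool" where
  "nl_valid DoubleWell = True"
| "nl_valid (FloryHuggins \<theta> \<theta>c) = (0 < \<theta> \<and> \<theta> < \<theta>c)"

fun nl_F :: "nonlin \<Rightarrow> real \<Rightarrow> real" where
  "nl_F DoubleWell x = (1/4) * (1 - x^2)^2"
| "nl_F (FloryHuggins \<theta> \<theta>c) x =
     \<theta>/2 * ((1 + x) * ln (1 + x) + (1 - x) * ln (1 - x)) - \<theta>c/2 * x^2"

fun nl_f :: "nonlin \<Rightarrow> real \<Rightarrow> real" where
  "nl_f DoubleWell x = x - x^3"
| "nl_f (FloryHuggins \<theta> \<theta>c) x = \<theta>/2 * ln ((1 - x) / (1 + x)) + \<theta>c * x"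

fun nl_beta :: "nonlin \<Rightarrow> real" where
  "nl_beta DoubleWell = 1"
| "nl_beta (FloryHuggins \<theta> \<theta>c) =
     (THE b. 0 < b \<and> b < 1 \<and> nl_f (FloryHuggins \<theta> \<theta>c) b = 0)"

type_synonym grid = "int \<Rightarrow> int \<Rightarrow> real"

definition periodic_grid :: "nat \<Rightarrow> grid \<Rightarrow> bool" where
  "periodic_grid M v \<longleftrightarrow> (\<forall>i j. v (i + int M) j = v i j \<and> v i (j + int M) = v i j)"

definition grid_inner :: "nat \<Rightarrow> real \<Rightarrow> grid \<Rightarrow> grid \<Rightarrow> real" where
  "grid_inner M h v w = h^2 * (\<Sum>i\<in>{1..int M}. \<Sum>j\<in>{1..int M}. v i j * w i j)"

definition grid_lap :: "real \<Rightarrow> grid \<Rightarrow> grid" where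
  "grid_lap h v = (\<lambda>i j. (v (i+1) j + v (i-1) j + v i (j+1) + v i (j-1) - 4 * v i j) / h^2)"

definition grid_grad_sq :: "nat \<Rightarrow> real \<Rightarrow> grid \<Rightarrow> real" where
  "grid_grad_sq M h v = h^2 * (\<Sum>i\<in>{1..int M}. \<Sum>j\<in>{1..int M}.
      ((v (i+1) j - v i j) / h)^2 + ((v i (j+1) - v i j) / h)^2)"

definition E1h :: "nonlin \<Rightarrow> nat \<Rightarrow> real \<Rightarrow> grid \<Rightarrow> real" where
  "E1h nl M h v = grid_inner M h (\<lambda>i j. nl_F nl (v i j)) (\<lambda>_ _. 1)"

definition gh :: "nonlin \<Rightarrow> nat \<Rightarrow> real \<Rightarrow> grid \<Rightarrow> real \<Rightarrow> real" where
  "gh nl M h v w = exp w / exp (E1h nl M h v)"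

definition mod_energy :: "nat \<Rightarrow> real \<Rightarrow> real \<Rightarrow> grid \<Rightarrow> real \<Rightarrow> real" where
  "mod_energy M h \<epsilon> \<phi> R = \<epsilon>^2 / 2 * grid_grad_sq M h \<phi> + R"

definition tau :: "(nat \<Rightarrow> real) \<Rightarrow> nat \<Rightarrow> real" where
  "tau t k = t k - t (k - 1)"

definition ratio :: "(nat \<Rightarrow> real) \<Rightarrow> nat \<Rightarrow> real" where
  "ratio t k = tau t k / tau t (k - 1)"

definition omega :: "real \<Rightarrow> real \<Rightarrow> real" where
  "omega \<mu> s = s powr (\<mu> - 1) / Gamma \<mu>"

definition t_shift :: "real \<Rightarrow> (nat \<Rightarrow> real) \<Rightarrow> nat \<Rightarrow> real" where
  "t_shift \<sigma> t n = (1 - \<sigma>) * t n + \<sigma> * t (n - 1)"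

text \<open>aL2 alpha t n k = a^{(n)}_{n-k}  (1 <= k <= n), sigma = alpha/2.\<close>
definition aL2 :: "real \<Rightarrow> (nat \<Rightarrow> real) \<Rightarrow> nat \<Rightarrow> nat \<Rightarrow> real" where
  "aL2 \<alpha> t n k = (1 / tau t k) *
     integral {t (k - 1) .. min (t k) (t_shift (\<alpha>/2) t n)}
       (\<lambda>s. omega (1 - \<alpha>) (t_shift (\<alpha>/2) t n - s))"

text \<open>bL2 alpha t n k = b^{(n)}_{n-k}  (1 <= k <= n-1).\<close>
definition bL2 :: "real \<Rightarrow> (nat \<Rightarrow> real) \<Rightarrow> nat \<Rightarrow> nat \<Rightarrow> real" where
  "bL2 \<alpha> t n k = 2 / (tau t k * (tau t k + tau t (k + 1))) *
     integral {t (k - 1) .. t k}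
       (\<lambda>s. (s - (t k + t (k - 1)) / 2) * omega (1 - \<alpha>) (t_shift (\<alpha>/2) t n - s))"

text \<open>BL2 alpha t n k = B^{(n)}_{n-k}  (1 <= k <= n); covers all cases of the definition.\<close>
definition BL2 :: "real \<Rightarrow> (nat \<Rightarrow> real) \<Rightarrow> nat \<Rightarrow> nat \<Rightarrow> real" where
  "BL2 \<alpha> t n k = aL2 \<alpha> t n k
     + (if 2 \<le> k then bL2 \<alpha> t n (k - 1) / ratio t k else 0)
     - (if k + 1 \<le> n then bL2 \<alpha> t n k else 0)"

definition caputo_L2 :: "real \<Rightarrow> (nat \<Rightarrow> real) \<Rightarrow> (nat \<Rightarrow> grid) \<Rightarrow> nat \<Rightarrow> grid" where
  "caputo_L2 \<alpha> t \<phi> n = (\<lambda>i j. \<Sum>k=1..n. BL2 \<alpha> t n k * (\<phi> k i j - \<phi> (k - 1) i j))"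

definition clip :: "real \<Rightarrow> real \<Rightarrow> real" where
  "clip \<beta> x = min (max x (-\<beta>)) \<beta>"

definition gmix :: "real \<Rightarrow> grid \<Rightarrow> grid \<Rightarrow> grid" where
  "gmix \<sigma> u w = (\<lambda>i j. (1 - \<sigma>) * u i j + \<sigma> * w i j)"

end

theory Submission
  imports Defs
begin

text \<open>
  Testing the scheme with \<open>\<phi>\<^sup>n - \<phi>\<^sup>n\<^sup>-\<^sup>1\<close> and adding the equation for \<open>R\<^sup>n\<close>, the explicit nonlinear
  and stabilisation terms cancel, and summation by parts turns the Laplacian term into the
  increment of the discrete gradient energy plus a nonnegative \<open>(1/2 - \<sigma>)\<close>-dissipation. So
  \<open>E\<^sup>n - E\<^sup>0 \<le> -(1/m) \<Sum>\<^sub>k \<langle>D\<^sup>\<alpha>\<phi>\<^sup>k, \<phi>\<^sup>k - \<phi>\<^sup>k\<^sup>-\<^sup>1\<rangle>\<close>, and it remains to show that the L2-1\<open>\<sigma>\<close>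
  convolution form \<open>\<Sum>\<^sub>k w\<^sub>k \<Sum>\<^sub>j\<^sub>\<le>\<^sub>k B\<^sup>(\<^sup>k\<^sup>)\<^sub>k\<^sub>-\<^sub>j w\<^sub>j\<close> is nonnegative. This holds for every
  lower triangular kernel whose backward differences in \<open>j\<close> are nonnegative and decrease in \<open>k\<close>.
  Integrating by parts, these differences become moments of the derivative of the Caputo kernel
  \<open>\<omega>\<^sub>1\<^sub>-\<^sub>\<alpha>(t\<^sub>n\<^sub>-\<^sub>\<sigma> - s)\<close>, which is positive and increasing in \<open>s\<close>, and so is its decrease from
  \<open>t\<^sub>n\<^sub>-\<^sub>\<sigma>\<close> to \<open>t\<^sub>n\<^sub>+\<^sub>1\<^sub>-\<^sub>\<sigma>\<close>; the ratio bound \<open>r\<^sub>k \<ge> 4/7\<close> controls the one negative history term.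
\<close>

lemma fundamental_theorem_of_calculus_real:
  fixes F f :: "real \<Rightarrow> real"
  assumes "a \<le> b" and "\<And>x. x \<in> {a..b} \<Longrightarrow> (F has_real_derivative f x) (at x)"
  shows "(f has_integral F b - F a) {a..b}"
proof (rule fundamental_theorem_of_calculus[OF assms(1)])
  fix x assume "x \<in> {a..b}"
  then show "(F has_vector_derivative f x) (at x within {a..b})"
    using assms(2) by (simp add: has_real_derivative_iff_has_vector_derivative[symmetric]
        has_field_derivative_at_within)
qed

lemma integral_powr_dist_right:
  fixes p q a :: real
  assumes "p \<le> q" and "-1 < a"
  shows "integral {p..q} (\<lambda>s. (q - s) powr a) = (q - p) powr (a + 1) / (a + 1)"
proof -
  let ?F = "\<lambda>s. - ((q - s) powr (a + 1) / (a + 1))"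
  have "((\<lambda>s. (q - s) powr a) has_integral (?F q - ?F p)) {p..q}"
  proof (rule fundamental_theorem_of_calculus_interior[OF assms(1)])
    show "continuous_on {p..q} ?F"
      using assms by (intro continuous_intros continuous_on_powr') auto
    fix x assume x: "x \<in> {p<..<q}"
    have "(?F has_real_derivative - (((a + 1) * (q - x) powr (a + 1 - 1) * (0 - 1)) / (a + 1))) (at x)"
      using x assms by (intro derivative_eq_intros refl) auto
    then show "(?F has_vector_derivative (q - x) powr a) (at x)"
      using assms by (simp add: has_real_derivative_iff_has_vector_derivative)
  qed
  then show ?thesis using assms by (simp add: integral_unique)
qed

section \<open>The Caputo kernel and its derivative\<close>

definition frac_kernel :: "real \<Rightarrow> real \<Rightarrow> real \<Rightarrow> real" where
  "frac_kernel \<alpha> T s = (T - s) powr (-\<alpha>) / Gamma (1 - \<alpha>)"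

definition frac_kernel_deriv :: "real \<Rightarrow> real \<Rightarrow> real \<Rightarrow> real" where
  "frac_kernel_deriv \<alpha> T s = \<alpha> * (T - s) powr (-\<alpha> - 1) / Gamma (1 - \<alpha>)"

lemma omega_eq_frac_kernel: "omega (1 - \<alpha>) (T - s) = frac_kernel \<alpha> T s"
  by (simp add: omega_def frac_kernel_def)

lemma frac_kernel_has_real_derivative:
  assumes "s < T"
  shows "(frac_kernel \<alpha> T has_real_derivative frac_kernel_deriv \<alpha> T s) (at s)"
proof -
  have "((\<lambda>s. (T - s) powr (-\<alpha>) * (1 / Gamma (1 - \<alpha>))) has_real_derivative
        (-\<alpha> * (T - s) powr (-\<alpha> - 1) * (0 - 1)) * (1 / Gamma (1 - \<alpha>))) (at s)"
    using assms by (intro derivative_eq_intros refl) auto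
  then show ?thesis unfolding frac_kernel_def frac_kernel_deriv_def by simp
qed

lemma continuous_on_frac_kernel: "q < T \<Longrightarrow> continuous_on {p..q} (frac_kernel \<alpha> T)"
  unfolding frac_kernel_def divide_inverse by (intro continuous_intros) auto

lemma continuous_on_frac_kernel_deriv: "q < T \<Longrightarrow> continuous_on {p..q} (frac_kernel_deriv \<alpha> T)"
  unfolding frac_kernel_deriv_def divide_inverse by (intro continuous_intros) auto

lemma frac_kernel_nonneg: "\<alpha> < 1 \<Longrightarrow> 0 \<le> frac_kernel \<alpha> T s"
  unfolding frac_kernel_def using Gamma_real_pos[of "1 - \<alpha>"] by simp

lemma frac_kernel_deriv_nonneg: "0 \<le> \<alpha> \<Longrightarrow> \<alpha> < 1 \<Longrightarrow> 0 \<le> frac_kernel_deriv \<alpha> T s"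
  unfolding frac_kernel_deriv_def using Gamma_real_pos[of "1 - \<alpha>"] by simp

lemma frac_kernel_deriv_mono:
  assumes "0 \<le> \<alpha>" "\<alpha> < 1" "s1 \<le> s2" "s2 < T"
  shows "frac_kernel_deriv \<alpha> T s1 \<le> frac_kernel_deriv \<alpha> T s2"
proof -
  have "(T - s1) powr (-\<alpha> - 1) \<le> (T - s2) powr (-\<alpha> - 1)"
    using assms by (intro powr_mono2') auto
  then show ?thesis unfolding frac_kernel_deriv_def using assms Gamma_real_pos[of "1 - \<alpha>"]
    by (intro divide_right_mono mult_left_mono) auto
qed

lemma frac_kernel_antimono_time:
  assumes "0 \<le> \<alpha>" "\<alpha> < 1" "s < T1" "T1 \<le> T2"
  shows "frac_kernel \<alpha> T2 s \<le> frac_kernel \<alpha> T1 s"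
proof -
  have "(T2 - s) powr (-\<alpha>) \<le> (T1 - s) powr (-\<alpha>)"
    using assms by (intro powr_mono2') auto
  then show ?thesis unfolding frac_kernel_def using assms Gamma_real_pos[of "1 - \<alpha>"]
    by (intro divide_right_mono) auto
qed

lemma frac_kernel_deriv_antimono_time:
  assumes "0 \<le> \<alpha>" "\<alpha> < 1" "s < T1" "T1 \<le> T2"
  shows "frac_kernel_deriv \<alpha> T2 s \<le> frac_kernel_deriv \<alpha> T1 s"
proof -
  have "(T2 - s) powr (-\<alpha> - 1) \<le> (T1 - s) powr (-\<alpha> - 1)"
    using assms by (intro powr_mono2') auto
  then show ?thesis unfolding frac_kernel_deriv_def using assms Gamma_real_pos[of "1 - \<alpha>"]
    by (intro divide_right_mono mult_left_mono) auto
qed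

lemma powr_diff_shift_antimono:
  fixes e \<delta> x1 x2 :: real
  assumes "e < 0" "0 < \<delta>" "0 < x2" "x2 \<le> x1"
  shows "x1 powr e - (x1 + \<delta>) powr e \<le> x2 powr e - (x2 + \<delta>) powr e"
proof -
  have "(\<lambda>x. x powr e - (x + \<delta>) powr e) x1 \<le> (\<lambda>x. x powr e - (x + \<delta>) powr e) x2"
  proof (rule DERIV_nonpos_imp_nonincreasing[OF assms(4)])
    fix x assume "x2 \<le> x" "x \<le> x1"
    then have x0: "0 < x" using assms by simp
    have "((\<lambda>x. x powr e - (x + \<delta>) powr e) has_real_derivative
            (e * x powr (e - 1) - e * (x + \<delta>) powr (e - 1) * (1 + 0))) (at x)"
      using x0 assms by (intro derivative_eq_intros refl) auto
    moreover have "(x + \<delta>) powr (e - 1) \<le> x powr (e - 1)"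
      using x0 assms by (intro powr_mono2') auto
    then have "e * x powr (e - 1) - e * (x + \<delta>) powr (e - 1) * (1 + 0) \<le> 0"
      using assms mult_left_mono_neg[of "(x + \<delta>) powr (e - 1)" "x powr (e - 1)" e] by simp
    ultimately show "\<exists>y. ((\<lambda>x. x powr e - (x + \<delta>) powr e) has_real_derivative y) (at x) \<and> y \<le> 0"
      by blast
  qed
  then show ?thesis by simp
qed

lemma frac_kernel_deriv_diff_mono:
  assumes "0 \<le> \<alpha>" "\<alpha> < 1" "s1 \<le> s2" "s2 < T1" "T1 < T2"
  shows "frac_kernel_deriv \<alpha> T1 s1 - frac_kernel_deriv \<alpha> T2 s1
         \<le> frac_kernel_deriv \<alpha> T1 s2 - frac_kernel_deriv \<alpha> T2 s2"
proof (cases "\<alpha> = 0")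
  case True
  then show ?thesis unfolding frac_kernel_deriv_def by simp
next
  case False
  have "(T1 - s1) powr (-\<alpha> - 1) - ((T1 - s1) + (T2 - T1)) powr (-\<alpha> - 1)
        \<le> (T1 - s2) powr (-\<alpha> - 1) - ((T1 - s2) + (T2 - T1)) powr (-\<alpha> - 1)"
    using assms False by (intro powr_diff_shift_antimono) auto
  then have "\<alpha> / Gamma (1 - \<alpha>) * ((T1 - s1) powr (-\<alpha> - 1) - (T2 - s1) powr (-\<alpha> - 1))
        \<le> \<alpha> / Gamma (1 - \<alpha>) * ((T1 - s2) powr (-\<alpha> - 1) - (T2 - s2) powr (-\<alpha> - 1))"
    using assms Gamma_real_pos[of "1 - \<alpha>"] by (intro mult_left_mono) auto
  then show ?thesis unfolding frac_kernel_deriv_def by (simp add: algebra_simps)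
qed

definition left_moment :: "(real \<Rightarrow> real) \<Rightarrow> real \<Rightarrow> real \<Rightarrow> real" where
  "left_moment g p q = integral {p..q} (\<lambda>s. (s - p) * g s)"

definition right_moment :: "(real \<Rightarrow> real) \<Rightarrow> real \<Rightarrow> real \<Rightarrow> real" where
  "right_moment g p q = integral {p..q} (\<lambda>s. (q - s) * g s)"

definition bubble_moment :: "(real \<Rightarrow> real) \<Rightarrow> real \<Rightarrow> real \<Rightarrow> real" where
  "bubble_moment g p q = integral {p..q} (\<lambda>s. (s - p) * (q - s) * g s)"

lemma left_moment_diff:
  "continuous_on {p..q} g1 \<Longrightarrow> continuous_on {p..q} g2 \<Longrightarrow>
   left_moment (\<lambda>s. g1 s - g2 s) p q = left_moment g1 p q - left_moment g2 p q"
  unfolding left_moment_def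
  by (subst integral_diff[symmetric])
    (auto intro!: integrable_continuous_interval continuous_intros simp: algebra_simps)

lemma bubble_moment_diff:
  "continuous_on {p..q} g1 \<Longrightarrow> continuous_on {p..q} g2 \<Longrightarrow>
   bubble_moment (\<lambda>s. g1 s - g2 s) p q = bubble_moment g1 p q - bubble_moment g2 p q"
  unfolding bubble_moment_def
  by (subst integral_diff[symmetric])
    (auto intro!: integrable_continuous_interval continuous_intros simp: algebra_simps)

lemma left_moment_nonneg:
  "continuous_on {p..q} g \<Longrightarrow> (\<And>s. s \<in> {p..q} \<Longrightarrow> 0 \<le> g s) \<Longrightarrow> 0 \<le> left_moment g p q"
  unfolding left_moment_def
  by (rule integral_nonneg) (auto intro!: integrable_continuous_interval continuous_intros)

lemma bubble_moment_nonneg: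
  "continuous_on {p..q} g \<Longrightarrow> (\<And>s. s \<in> {p..q} \<Longrightarrow> 0 \<le> g s) \<Longrightarrow> 0 \<le> bubble_moment g p q"
  unfolding bubble_moment_def
  by (rule integral_nonneg) (auto intro!: integrable_continuous_interval continuous_intros)

lemma left_moment_ge:
  assumes "p \<le> q" "continuous_on {p..q} g" "\<And>s. s \<in> {p..q} \<Longrightarrow> c \<le> g s"
  shows "c * (q - p)^2 / 2 \<le> left_moment g p q"
proof -
  have "((\<lambda>s. (s - p) * c) has_integral (c * (q - p)^2 / 2 - c * (p - p)^2 / 2)) {p..q}"
    using assms(1) by (intro fundamental_theorem_of_calculus_real[where F = "\<lambda>s. c * (s - p)^2 / 2"])
      (auto intro!: derivative_eq_intros simp: field_simps)
  then have "c * (q - p)^2 / 2 = integral {p..q} (\<lambda>s. (s - p) * c)"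
    by (simp add: integral_unique del: integral_mult_left integral_mult_right)
  also have "\<dots> \<le> left_moment g p q"
    unfolding left_moment_def using assms
    by (intro integral_le) (auto intro!: integrable_continuous_interval continuous_intros mult_left_mono)
  finally show ?thesis .
qed

lemma bubble_moment_le:
  assumes "p \<le> q" "continuous_on {p..q} g" "\<And>s. s \<in> {p..q} \<Longrightarrow> g s \<le> c"
  shows "bubble_moment g p q \<le> c * (q - p)^3 / 6"
proof -
  let ?F = "\<lambda>s. c * ((q - p) * (s - p)^2 / 2 - (s - p)^3 / 3)"
  have "((\<lambda>s. (s - p) * (q - s) * c) has_integral (?F q - ?F p)) {p..q}"
    using assms(1) by (intro fundamental_theorem_of_calculus_real)
      (auto intro!: derivative_eq_intros simp: field_simps power2_eq_square power3_eq_cube)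
  then have integral_eq: "integral {p..q} (\<lambda>s. (s - p) * (q - s) * c) = c * (q - p)^3 / 6"
    by (simp add: integral_unique power2_eq_square power3_eq_cube field_simps)
  have "bubble_moment g p q \<le> integral {p..q} (\<lambda>s. (s - p) * (q - s) * c)"
    unfolding bubble_moment_def using assms
    by (intro integral_le) (auto intro!: integrable_continuous_interval continuous_intros mult_left_mono)
  then show ?thesis unfolding integral_eq .
qed

lemma right_bubble_moment_combination:
  assumes "continuous_on {p..q} g"
  shows "(r - p) * right_moment g p q - bubble_moment g p q
         = integral {p..q} (\<lambda>s. (q - s) * (r - s) * g s)"
proof -
  have "(r - p) * right_moment g p q - bubble_moment g p q
        = integral {p..q} (\<lambda>s. (r - p) * ((q - s) * g s) - (s - p) * (q - s) * g s)"
    unfolding right_moment_def bubble_moment_def using assms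
    by (subst integral_diff) (auto intro!: integrable_continuous_interval continuous_intros)
  also have "\<dots> = integral {p..q} (\<lambda>s. (q - s) * (r - s) * g s)"
    by (rule arg_cong[where f = "integral _"]) (auto simp: fun_eq_iff algebra_simps)
  finally show ?thesis .
qed

section \<open>Integrating the kernel by parts\<close>

lemma integral_frac_kernel_left:
  assumes "p \<le> q" "q < T"
  shows "integral {p..q} (frac_kernel \<alpha> T)
         = (q - p) * frac_kernel \<alpha> T q - left_moment (frac_kernel_deriv \<alpha> T) p q"
proof -
  have parts: "((\<lambda>s. frac_kernel \<alpha> T s + (s - p) * frac_kernel_deriv \<alpha> T s) has_integral
          ((q - p) * frac_kernel \<alpha> T q - (p - p) * frac_kernel \<alpha> T p)) {p..q}"
    using assms
    by (intro fundamental_theorem_of_calculus_real[where F = "\<lambda>s. (s - p) * frac_kernel \<alpha> T s"])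
      (auto intro!: derivative_eq_intros frac_kernel_has_real_derivative)
  have i1: "frac_kernel \<alpha> T integrable_on {p..q}"
    using continuous_on_frac_kernel[OF assms(2)] integrable_continuous_interval by blast
  have i2: "(\<lambda>s. (s - p) * frac_kernel_deriv \<alpha> T s) integrable_on {p..q}"
    using continuous_on_frac_kernel_deriv[OF assms(2)]
    by (intro integrable_continuous_interval continuous_intros) auto
  show ?thesis
    unfolding left_moment_def using integral_add[OF i1 i2] integral_unique[OF parts] by simp
qed

lemma integral_frac_kernel_right:
  assumes "p \<le> q" "q < T"
  shows "integral {p..q} (frac_kernel \<alpha> T)
         = (q - p) * frac_kernel \<alpha> T p + right_moment (frac_kernel_deriv \<alpha> T) p q"
proof -
  have parts: "((\<lambda>s. frac_kernel \<alpha> T s - (q - s) * frac_kernel_deriv \<alpha> T s) has_integral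
          (-(q - q) * frac_kernel \<alpha> T q - (-(q - p)) * frac_kernel \<alpha> T p)) {p..q}"
    using assms
    by (intro fundamental_theorem_of_calculus_real[where F = "\<lambda>s. -(q - s) * frac_kernel \<alpha> T s"])
      (auto intro!: derivative_eq_intros frac_kernel_has_real_derivative simp: algebra_simps)
  have i1: "frac_kernel \<alpha> T integrable_on {p..q}"
    using continuous_on_frac_kernel[OF assms(2)] integrable_continuous_interval by blast
  have i2: "(\<lambda>s. (q - s) * frac_kernel_deriv \<alpha> T s) integrable_on {p..q}"
    using continuous_on_frac_kernel_deriv[OF assms(2)]
    by (intro integrable_continuous_interval continuous_intros) auto
  have "integral {p..q} (frac_kernel \<alpha> T) - right_moment (frac_kernel_deriv \<alpha> T) p q
      = (q - p) * frac_kernel \<alpha> T p"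
    unfolding right_moment_def using integral_diff[OF i1 i2] integral_unique[OF parts]
    by (simp add: algebra_simps)
  then show ?thesis by linarith
qed

lemma integral_frac_kernel_centered:
  assumes "p \<le> q" "q < T"
  shows "integral {p..q} (\<lambda>s. (s - (q + p) / 2) * frac_kernel \<alpha> T s)
         = bubble_moment (frac_kernel_deriv \<alpha> T) p q / 2"
proof -
  have parts: "((\<lambda>s. (s - (q + p) / 2) * frac_kernel \<alpha> T s
             - ((s - p) * (q - s) / 2) * frac_kernel_deriv \<alpha> T s) has_integral
          (((q - p) * (q - q) / 2) * frac_kernel \<alpha> T q
           - ((p - p) * (p - q) / 2) * frac_kernel \<alpha> T p)) {p..q}"
    using assms
    by (intro fundamental_theorem_of_calculus_real
        [where F = "\<lambda>s. ((s - p) * (s - q) / 2) * frac_kernel \<alpha> T s"])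
      (auto intro!: derivative_eq_intros frac_kernel_has_real_derivative simp: field_simps)
  have i1: "(\<lambda>s. (s - (q + p) / 2) * frac_kernel \<alpha> T s) integrable_on {p..q}"
    using continuous_on_frac_kernel[OF assms(2)]
    by (intro integrable_continuous_interval continuous_intros) auto
  have i2: "(\<lambda>s. ((s - p) * (q - s) / 2) * frac_kernel_deriv \<alpha> T s) integrable_on {p..q}"
    using continuous_on_frac_kernel_deriv[OF assms(2)]
    by (intro integrable_continuous_interval continuous_intros) auto
  have "integral {p..q} (\<lambda>s. (s - (q + p) / 2) * frac_kernel \<alpha> T s)
      = integral {p..q} (\<lambda>s. ((s - p) * (q - s) / 2) * frac_kernel_deriv \<alpha> T s)"
    using integral_diff[OF i1 i2] integral_unique[OF parts] by simp
  also have "\<dots> = integral {p..q} (\<lambda>s. (s - p) * (q - s) * frac_kernel_deriv \<alpha> T s / 2)"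
    by (rule arg_cong[where f = "integral _"]) (auto simp: fun_eq_iff)
  also have "\<dots> = bubble_moment (frac_kernel_deriv \<alpha> T) p q / 2"
    unfolding bubble_moment_def by (rule integral_divide)
  finally show ?thesis .
qed

definition backward_diff :: "(nat \<Rightarrow> real) \<Rightarrow> nat \<Rightarrow> real" where
  "backward_diff c l = c l - (if l = 1 then 0 else c (l - 1))"

text \<open>For \<open>2 \<le> l < n\<close>, integration by parts turns \<open>B\<^sup>(\<^sup>n\<^sup>)\<^sub>n\<^sub>-\<^sub>l - B\<^sup>(\<^sup>n\<^sup>)\<^sub>n\<^sub>-\<^sub>l\<^sub>+\<^sub>1\<close> into these moments of
  \<open>g = \<partial>\<^sub>s \<omega>\<^sub>1\<^sub>-\<^sub>\<alpha>(t\<^sub>n\<^sub>-\<^sub>\<sigma> - s)\<close>, taken over \<open>[t\<^sub>l\<^sub>-\<^sub>3, t\<^sub>l\<^sub>-\<^sub>1]\<close> and over \<open>[t\<^sub>l\<^sub>-\<^sub>1, t\<^sub>l]\<close>.\<close>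
definition coeff_diff_hist :: "(nat \<Rightarrow> real) \<Rightarrow> (real \<Rightarrow> real) \<Rightarrow> nat \<Rightarrow> real" where
  "coeff_diff_hist t g l =
     left_moment g (t (l - 2)) (t (l - 1)) / tau t (l - 1)
     + bubble_moment g (t (l - 2)) (t (l - 1)) / (tau t (l - 1) * tau t l)
     - (if 3 \<le> l then bubble_moment g (t (l - 3)) (t (l - 2))
                       / (tau t (l - 1) * (tau t (l - 2) + tau t (l - 1))) else 0)"

definition coeff_diff_local :: "(nat \<Rightarrow> real) \<Rightarrow> (real \<Rightarrow> real) \<Rightarrow> nat \<Rightarrow> real" where
  "coeff_diff_local t g l =
     integral {t (l - 1)..t l} (\<lambda>s. (t l - s) * (t (l + 1) - s) * g s)
     / (tau t l * (tau t l + tau t (l + 1)))"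

lemma coeff_diff_local_nonneg:
  assumes "t (l - 1) \<le> t l" "t l \<le> t (l + 1)" "continuous_on {t (l - 1)..t l} g"
    and "\<And>s. s \<in> {t (l - 1)..t l} \<Longrightarrow> 0 \<le> g s"
  shows "0 \<le> coeff_diff_local t g l"
  unfolding coeff_diff_local_def tau_def using assms
  by (intro divide_nonneg_nonneg integral_nonneg mult_nonneg_nonneg)
    (auto intro!: integrable_continuous_interval continuous_intros)

lemma coeff_diff_local_diff:
  assumes "continuous_on {t (l - 1)..t l} g1" "continuous_on {t (l - 1)..t l} g2"
  shows "coeff_diff_local t (\<lambda>s. g1 s - g2 s) l = coeff_diff_local t g1 l - coeff_diff_local t g2 l"
proof -
  have "integral {t (l - 1)..t l} (\<lambda>s. (t l - s) * (t (l + 1) - s) * (g1 s - g2 s))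
      = integral {t (l - 1)..t l} (\<lambda>s. (t l - s) * (t (l + 1) - s) * g1 s)
        - integral {t (l - 1)..t l} (\<lambda>s. (t l - s) * (t (l + 1) - s) * g2 s)"
    using assms by (subst integral_diff[symmetric])
      (auto intro!: integrable_continuous_interval continuous_intros simp: algebra_simps)
  then show ?thesis unfolding coeff_diff_local_def by (simp add: diff_divide_distrib)
qed

text \<open>The only place where the mesh ratio bound \<open>4/7\<close> enters: \<open>3 (4/7)\<^sup>2 (1 + 4/7) \<ge> 1\<close>.\<close>
lemma cube_le_of_ratio_ge:
  fixes a b :: real
  assumes "0 < a" "4/7 * a \<le> b"
  shows "a^3 / (6 * b * (a + b)) \<le> b / 2"
proof -
  have "(4/7 * a)^2 * (11/7 * a) \<le> b^2 * (a + b)"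
    using assms by (intro mult_mono power_mono) auto
  moreover have "(4/7 * a)^2 * (11/7 * a) = 176/343 * a^3"
    by (simp add: power2_eq_square power3_eq_cube)
  moreover have "0 \<le> a^3" using assms by simp
  ultimately have "a^3 \<le> 3 * (b^2 * (a + b))" by linarith
  also have "\<dots> = b / 2 * (6 * b * (a + b))" by (simp add: power2_eq_square)
  finally show ?thesis using assms by (simp add: pos_divide_le_eq)
qed

lemma dist_mul_frac_kernel_deriv_le:
  fixes \<alpha> q r s :: real
  assumes "0 < \<alpha>" "\<alpha> < 1" "s \<le> q" "q < r"
  shows "(q - s) * (r - s) * frac_kernel_deriv \<alpha> (r - \<alpha>/2 * (r - q)) s
         \<le> \<alpha> / ((1 - \<alpha>/2) * Gamma (1 - \<alpha>)) * (q - s) powr (1 - \<alpha>)"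
proof -
  define x where "x = q - s"
  define y where "y = r - \<alpha>/2 * (r - q) - s"
  have x_nonneg: "0 \<le> x" using assms unfolding x_def by simp
  have "0 \<le> (1 - \<alpha>/2) * (r - q)" using assms by (intro mult_nonneg_nonneg) auto
  then have x_le_y: "x \<le> y" unfolding x_def y_def by (simp add: algebra_simps)
  have "0 < (1 - \<alpha>/2) * (r - q)" using assms by (intro mult_pos_pos) auto
  then have y_pos: "0 < y" using assms unfolding y_def by (simp add: algebra_simps)
  have Gamma_pos: "0 < Gamma (1 - \<alpha>)" using assms by (intro Gamma_real_pos) simp
  have "y - (1 - \<alpha>/2) * (r - s) = \<alpha>/2 * (q - s)" unfolding y_def by (simp add: field_simps)
  moreover have "0 \<le> \<alpha>/2 * (q - s)" using assms by simp
  ultimately have "(1 - \<alpha>/2) * (r - s) \<le> y" by linarith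
  then have r_le: "r - s \<le> y / (1 - \<alpha>/2)" using assms by (simp add: field_simps)
  have y_powr: "y * y powr (-\<alpha> - 1) = y powr (-\<alpha>)"
    using powr_add[of y 1 "-\<alpha> - 1"] y_pos by simp
  have x_powr: "x * y powr (-\<alpha>) \<le> x powr (1 - \<alpha>)"
  proof (cases "x = 0")
    case False
    then have "0 < x" using x_nonneg by simp
    then have "x * y powr (-\<alpha>) \<le> x * x powr (-\<alpha>)"
      using x_le_y assms by (intro mult_left_mono powr_mono2') auto
    also have "x * x powr (-\<alpha>) = x powr (1 - \<alpha>)"
      using powr_add[of x 1 "-\<alpha>"] \<open>0 < x\<close> by simp
    finally show ?thesis .
  qed simp
  have "(q - s) * (r - s) * frac_kernel_deriv \<alpha> (r - \<alpha>/2 * (r - q)) s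
        = x * ((r - s) * (\<alpha> * y powr (-\<alpha> - 1) / Gamma (1 - \<alpha>)))"
    unfolding frac_kernel_deriv_def x_def y_def by simp
  also have "\<dots> \<le> x * (y / (1 - \<alpha>/2) * (\<alpha> * y powr (-\<alpha> - 1) / Gamma (1 - \<alpha>)))"
    using x_nonneg r_le assms Gamma_pos by (intro mult_left_mono mult_right_mono) auto
  also have "\<dots> = \<alpha> / ((1 - \<alpha>/2) * Gamma (1 - \<alpha>)) * (x * (y * y powr (-\<alpha> - 1)))"
    by (simp add: field_simps)
  also have "\<dots> \<le> \<alpha> / ((1 - \<alpha>/2) * Gamma (1 - \<alpha>)) * x powr (1 - \<alpha>)"
    unfolding y_powr using x_powr assms Gamma_pos by (intro mult_left_mono) auto
  finally show ?thesis unfolding x_def .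
qed

lemma alpha_coeff_le:
  fixes \<alpha> :: real
  assumes "0 < \<alpha>" "\<alpha> < 1"
  shows "\<alpha> / ((1 - \<alpha>/2) * (2 - \<alpha>)) \<le> \<alpha>/2 / (1 - \<alpha>)"
proof -
  have pos: "0 < (1 - \<alpha>/2) * (2 - \<alpha>)" "0 < 1 - \<alpha>" using assms by auto
  have "\<alpha> * (1 - \<alpha>) \<le> \<alpha>/2 * ((1 - \<alpha>/2) * (2 - \<alpha>))"
    using assms by (simp add: algebra_simps power2_eq_square)
  then have "\<alpha> \<le> \<alpha>/2 * ((1 - \<alpha>/2) * (2 - \<alpha>)) / (1 - \<alpha>)"
    using pos by (subst pos_le_divide_eq) auto
  then show ?thesis using pos by (simp add: pos_divide_le_eq)
qed

locale L2_1sigma_mesh =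
  fixes \<alpha> :: real and t :: "nat \<Rightarrow> real" and N :: nat
  assumes alpha_pos: "0 < \<alpha>" and alpha_less_1: "\<alpha> < 1"
    and mesh_increasing: "\<forall>k\<in>{1..N}. t (k - 1) < t k"
    and mesh_ratio: "\<forall>k\<in>{2..N}. 4/7 \<le> ratio t k"
begin

abbreviation t_sigma :: "nat \<Rightarrow> real" where
  "t_sigma n \<equiv> t_shift (\<alpha> / 2) t n"

abbreviation kern :: "nat \<Rightarrow> real \<Rightarrow> real" where
  "kern n \<equiv> frac_kernel \<alpha> (t_sigma n)"

abbreviation kern_deriv :: "nat \<Rightarrow> real \<Rightarrow> real" where
  "kern_deriv n \<equiv> frac_kernel_deriv \<alpha> (t_sigma n)"

lemma mesh_less:
  assumes "i < j" "j \<le> N"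
  shows "t i < t j"
proof (rule lift_Suc_mono_less_ivl[of "{..<N}", OF _ assms(1)])
  show "t m < t (Suc m)" if "m \<in> {..<N}" for m
    using bspec[OF mesh_increasing, of "Suc m"] that by simp
qed (use assms in auto)

lemma mesh_le: "i \<le> j \<Longrightarrow> j \<le> N \<Longrightarrow> t i \<le> t j"
  using mesh_less[of i j] by (cases "i = j") auto

lemma tau_pos: "1 \<le> k \<Longrightarrow> k \<le> N \<Longrightarrow> 0 < tau t k"
  using mesh_increasing unfolding tau_def by auto

lemma tau_ratio:
  assumes "2 \<le> k" "k \<le> N"
  shows "4/7 * tau t (k - 1) \<le> tau t k"
  using bspec[OF mesh_ratio, of k] tau_pos[of "k - 1"] assms
  by (simp add: ratio_def pos_le_divide_eq)

lemma t_sigma_minus_prev: "t_sigma n - t (n - 1) = (1 - \<alpha>/2) * tau t n"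
  and t_sigma_eq: "t_sigma n = t n - \<alpha>/2 * tau t n"
  unfolding t_shift_def tau_def by (auto simp: algebra_simps)

lemma t_sigma_gt_prev:
  assumes "1 \<le> n" "n \<le> N"
  shows "t (n - 1) < t_sigma n"
proof -
  have "0 < (1 - \<alpha>/2) * tau t n"
    using tau_pos[OF assms] alpha_less_1 by (intro mult_pos_pos) auto
  then show ?thesis using t_sigma_minus_prev[of n] by linarith
qed

lemma t_sigma_le: "1 \<le> n \<Longrightarrow> n \<le> N \<Longrightarrow> t_sigma n \<le> t n"
  using tau_pos[of n] alpha_pos unfolding t_sigma_eq by simp

lemma mesh_less_t_sigma:
  assumes "k < n" "n \<le> N"
  shows "t k < t_sigma n"
proof -
  have "t k \<le> t (n - 1)" using assms by (intro mesh_le) auto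
  also have "\<dots> < t_sigma n" using assms by (intro t_sigma_gt_prev) auto
  finally show ?thesis .
qed

lemma aL2_eq:
  assumes "1 \<le> k" "k < n" "n \<le> N"
  shows "aL2 \<alpha> t n k = integral {t (k - 1)..t k} (kern n) / tau t k"
proof -
  have "min (t k) (t_sigma n) = t k" using mesh_less_t_sigma[OF assms(2,3)] by simp
  then show ?thesis unfolding aL2_def omega_eq_frac_kernel by simp
qed

lemma aL2_eq_right:
  assumes "1 \<le> k" "k < n" "n \<le> N"
  shows "aL2 \<alpha> t n k
         = kern n (t (k - 1)) + right_moment (kern_deriv n) (t (k - 1)) (t k) / tau t k"
  using integral_frac_kernel_right[of "t (k - 1)" "t k" "t_sigma n" \<alpha>]
    mesh_less_t_sigma[OF assms(2,3)] mesh_le[of "k - 1" k] tau_pos[of k] assms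
  unfolding aL2_eq[OF assms] by (simp add: tau_def field_simps)

lemma aL2_eq_left:
  assumes "1 \<le> k" "k < n" "n \<le> N"
  shows "aL2 \<alpha> t n k
         = kern n (t k) - left_moment (kern_deriv n) (t (k - 1)) (t k) / tau t k"
  using integral_frac_kernel_left[of "t (k - 1)" "t k" "t_sigma n" \<alpha>]
    mesh_less_t_sigma[OF assms(2,3)] mesh_le[of "k - 1" k] tau_pos[of k] assms
  unfolding aL2_eq[OF assms] by (simp add: tau_def field_simps)

lemma bL2_eq_bubble:
  assumes "1 \<le> k" "k < n" "n \<le> N"
  shows "bL2 \<alpha> t n k = bubble_moment (kern_deriv n) (t (k - 1)) (t k)
                        / (tau t k * (tau t k + tau t (k + 1)))"
  using integral_frac_kernel_centered[of "t (k - 1)" "t k" "t_sigma n" \<alpha>]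
    mesh_less_t_sigma[OF assms(2,3)] mesh_le[of "k - 1" k] assms
  unfolding bL2_def by (simp add: omega_eq_frac_kernel)

lemma aL2_diag:
  assumes "1 \<le> n" "n \<le> N"
  shows "aL2 \<alpha> t n n = (1 - \<alpha>/2) / (1 - \<alpha>) * kern n (t (n - 1))"
proof -
  define x where "x = t_sigma n - t (n - 1)"
  have x_pos: "0 < x" using t_sigma_gt_prev[OF assms] unfolding x_def by simp
  have tau_pos': "0 < tau t n" using tau_pos[OF assms] .
  have "omega (1 - \<alpha>) (t_sigma n - s) = (t_sigma n - s) powr (-\<alpha>) / Gamma (1 - \<alpha>)" for s
    unfolding omega_def by simp
  then have "integral {t (n - 1)..t_sigma n} (\<lambda>s. omega (1 - \<alpha>) (t_sigma n - s))
      = integral {t (n - 1)..t_sigma n} (\<lambda>s. (t_sigma n - s) powr (-\<alpha>)) / Gamma (1 - \<alpha>)"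
    by (simp add: integral_divide)
  also have "\<dots> = x powr (1 - \<alpha>) / (1 - \<alpha>) / Gamma (1 - \<alpha>)"
    using integral_powr_dist_right[of "t (n - 1)" "t_sigma n" "-\<alpha>"] x_pos alpha_less_1
    unfolding x_def by simp
  also have "x powr (1 - \<alpha>) = x * x powr (-\<alpha>)"
    using powr_add[of x 1 "-\<alpha>"] x_pos by simp
  finally have "aL2 \<alpha> t n n = x * x powr (-\<alpha>) / (1 - \<alpha>) / Gamma (1 - \<alpha>) / tau t n"
    using t_sigma_le[OF assms] unfolding aL2_def by (simp add: min_def)
  also have "\<dots> = x / tau t n / (1 - \<alpha>) * (x powr (-\<alpha>) / Gamma (1 - \<alpha>))"
    by simp
  also have "x / tau t n = 1 - \<alpha>/2"
    using t_sigma_minus_prev[of n] tau_pos' unfolding x_def by simp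
  finally show ?thesis unfolding frac_kernel_def x_def .
qed

lemma bL2_div_ratio:
  assumes "2 \<le> k" "k \<le> n" "n \<le> N"
  shows "bL2 \<alpha> t n (k - 1) / ratio t k
         = bubble_moment (kern_deriv n) (t (k - 2)) (t (k - 1))
           / (tau t k * (tau t (k - 1) + tau t k))"
proof -
  define Z where "Z = bubble_moment (kern_deriv n) (t (k - 2)) (t (k - 1))"
  define u where "u = tau t (k - 1) + tau t k"
  have pos: "0 < tau t (k - 1)" "0 < tau t k" using tau_pos[of "k - 1"] tau_pos[of k] assms by auto
  then have "0 < u" unfolding u_def by simp
  have "bL2 \<alpha> t n (k - 1) = Z / (tau t (k - 1) * u)"
    using bL2_eq_bubble[of "k - 1" n] assms unfolding Z_def u_def by (simp add: numeral_2_eq_2)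
  then have "bL2 \<alpha> t n (k - 1) / ratio t k = Z / (tau t k * u)"
    using pos \<open>0 < u\<close> unfolding ratio_def by (simp add: field_simps)
  then show ?thesis unfolding Z_def u_def .
qed

definition hist_part :: "nat \<Rightarrow> nat \<Rightarrow> real" where
  "hist_part n l = (if l = 1 then kern n (t 0) else coeff_diff_hist t (kern_deriv n) l)"

definition local_part :: "nat \<Rightarrow> nat \<Rightarrow> real" where
  "local_part n l = aL2 \<alpha> t n l - kern n (t (l - 1)) - (if l < n then bL2 \<alpha> t n l else 0)"

lemma backward_diff_BL2:
  assumes "1 \<le> l" "l \<le> n" "n \<le> N"
  shows "backward_diff (BL2 \<alpha> t n) l = hist_part n l + local_part n l"
proof (cases "l = 1")
  case True
  then show ?thesis
    unfolding backward_diff_def BL2_def hist_part_def local_part_def by simp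
next
  case False
  then have l2: "2 \<le> l" using assms by simp
  define X where "X = left_moment (kern_deriv n) (t (l - 2)) (t (l - 1))"
  define Z where "Z = bubble_moment (kern_deriv n) (t (l - 2)) (t (l - 1))"
  define Z' where "Z' = (if 3 \<le> l then bubble_moment (kern_deriv n) (t (l - 3)) (t (l - 2))
                              / (tau t (l - 1) * (tau t (l - 2) + tau t (l - 1))) else 0)"
  have pos: "0 < tau t (l - 1)" "0 < tau t l" using tau_pos[of "l - 1"] tau_pos[of l] assms l2 by auto
  have prev_a: "aL2 \<alpha> t n (l - 1) = kern n (t (l - 1)) - X / tau t (l - 1)"
    using aL2_eq_left[of "l - 1" n] assms l2 unfolding X_def by (simp add: numeral_2_eq_2)
  have b_eq: "bL2 \<alpha> t n (l - 1) = Z / (tau t (l - 1) * (tau t (l - 1) + tau t l))"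
    using bL2_eq_bubble[of "l - 1" n] assms l2 unfolding Z_def by (simp add: numeral_2_eq_2)
  have b_div_eq: "bL2 \<alpha> t n (l - 1) / ratio t l = Z / (tau t l * (tau t (l - 1) + tau t l))"
    using bL2_div_ratio[of l n] assms l2 unfolding Z_def by simp
  have "Z / (tau t l * (tau t (l - 1) + tau t l))
      + Z / (tau t (l - 1) * (tau t (l - 1) + tau t l)) = Z / (tau t (l - 1) * tau t l)"
    using pos by (simp add: divide_simps) (simp add: algebra_simps)
  then have prev_b: "bL2 \<alpha> t n (l - 1) / ratio t l + bL2 \<alpha> t n (l - 1)
      = Z / (tau t (l - 1) * tau t l)"
    using b_eq b_div_eq by linarith
  have prev_hist: "(if 2 \<le> l - 1 then bL2 \<alpha> t n (l - 1 - 1) / ratio t (l - 1) else 0) = Z'"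
    using bL2_div_ratio[of "l - 1" n] assms unfolding Z'_def
    by (auto simp: numeral_2_eq_2 numeral_3_eq_3)
  have "backward_diff (BL2 \<alpha> t n) l
      = aL2 \<alpha> t n l + bL2 \<alpha> t n (l - 1) / ratio t l - (if l < n then bL2 \<alpha> t n l else 0)
        - (aL2 \<alpha> t n (l - 1) + (if 2 \<le> l - 1 then bL2 \<alpha> t n (l - 1 - 1) / ratio t (l - 1) else 0)
           - bL2 \<alpha> t n (l - 1))"
    unfolding backward_diff_def BL2_def using l2 assms by simp
  also have "\<dots> = (X / tau t (l - 1) + Z / (tau t (l - 1) * tau t l) - Z') + local_part n l"
    unfolding prev_a prev_hist prev_b[symmetric] local_part_def by simp
  finally show ?thesis
    unfolding hist_part_def coeff_diff_hist_def X_def Z_def Z'_def using False by simp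
qed

lemma local_part_eq:
  assumes "1 \<le> l" "l < n" "n \<le> N"
  shows "local_part n l = coeff_diff_local t (kern_deriv n) l"
proof -
  define R where "R = right_moment (kern_deriv n) (t (l - 1)) (t l)"
  define Z where "Z = bubble_moment (kern_deriv n) (t (l - 1)) (t l)"
  define u where "u = tau t l + tau t (l + 1)"
  have pos: "0 < tau t l" "0 < u"
    using tau_pos[of l] tau_pos[of "l + 1"] assms unfolding u_def by auto
  have cont: "continuous_on {t (l - 1)..t l} (kern_deriv n)"
    using mesh_less_t_sigma[OF assms(2,3)] by (rule continuous_on_frac_kernel_deriv)
  have "t (l + 1) - t (l - 1) = u" unfolding u_def tau_def by simp
  then have comb: "u * R - Z = integral {t (l - 1)..t l} (\<lambda>s. (t l - s) * (t (l + 1) - s) * kern_deriv n s)"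
    using right_bubble_moment_combination[OF cont, of "t (l + 1)"] unfolding R_def Z_def by simp
  have "local_part n l = R / tau t l - Z / (tau t l * u)"
    unfolding local_part_def R_def Z_def u_def
    using aL2_eq_right[OF assms] bL2_eq_bubble[OF assms] assms by simp
  also have "\<dots> = (u * R - Z) / (tau t l * u)" using pos by (simp add: field_simps)
  finally show ?thesis unfolding coeff_diff_local_def comb[symmetric] u_def .
qed

lemma local_part_diag:
  assumes "1 \<le> n" "n \<le> N"
  shows "local_part n n = \<alpha>/2 / (1 - \<alpha>) * kern n (t (n - 1))"
  unfolding local_part_def aL2_diag[OF assms] using alpha_less_1 by (simp add: field_simps)

lemma coeff_diff_local_next_le:
  assumes "1 \<le> k" "k < N"
  shows "coeff_diff_local t (kern_deriv (k + 1)) k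
         \<le> \<alpha> / ((1 - \<alpha>/2) * (2 - \<alpha>)) * (tau t k powr (-\<alpha>) / Gamma (1 - \<alpha>))"
proof -
  define \<tau> where "\<tau> = tau t k"
  define c where "c = \<alpha> / ((1 - \<alpha>/2) * Gamma (1 - \<alpha>))"
  have \<tau>_pos: "0 < \<tau>" "0 < tau t (k + 1)"
    using tau_pos[of k] tau_pos[of "k + 1"] assms unfolding \<tau>_def by auto
  have c_nonneg: "0 \<le> c"
    unfolding c_def using alpha_pos alpha_less_1 Gamma_real_pos[of "1 - \<alpha>"] by simp
  have t_sigma_next: "t_sigma (k + 1) = t (k + 1) - \<alpha>/2 * (t (k + 1) - t k)"
    using t_sigma_eq[of "k + 1"] unfolding tau_def by simp
  have cont: "continuous_on {t (k - 1)..t k} (kern_deriv (k + 1))"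
    using mesh_less_t_sigma[of k "k + 1"] assms by (intro continuous_on_frac_kernel_deriv) auto
  have "integral {t (k - 1)..t k} (\<lambda>s. (t k - s) * (t (k + 1) - s) * kern_deriv (k + 1) s)
        \<le> integral {t (k - 1)..t k} (\<lambda>s. c * (t k - s) powr (1 - \<alpha>))"
  proof (rule integral_le)
    show "(\<lambda>s. (t k - s) * (t (k + 1) - s) * kern_deriv (k + 1) s) integrable_on {t (k - 1)..t k}"
      using cont by (intro integrable_continuous_interval continuous_intros)
    show "(\<lambda>s. c * (t k - s) powr (1 - \<alpha>)) integrable_on {t (k - 1)..t k}"
      using alpha_less_1 by (intro integrable_continuous_interval continuous_intros continuous_on_powr') auto
    show "(t k - s) * (t (k + 1) - s) * kern_deriv (k + 1) s \<le> c * (t k - s) powr (1 - \<alpha>)"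
      if "s \<in> {t (k - 1)..t k}" for s
      unfolding t_sigma_next c_def using that mesh_less[of k "k + 1"] assms alpha_pos alpha_less_1
      by (intro dist_mul_frac_kernel_deriv_le) auto
  qed
  also have "\<dots> = c * (\<tau> powr (2 - \<alpha>) / (2 - \<alpha>))"
    using integral_powr_dist_right[of "t (k - 1)" "t k" "1 - \<alpha>"] \<tau>_pos alpha_less_1
    unfolding \<tau>_def tau_def by (simp add: algebra_simps)
  also have "\<tau> powr (2 - \<alpha>) = \<tau>\<^sup>2 * \<tau> powr (-\<alpha>)"
    using powr_add[of \<tau> 2 "-\<alpha>"] \<tau>_pos by simp
  finally have "integral {t (k - 1)..t k} (\<lambda>s. (t k - s) * (t (k + 1) - s) * kern_deriv (k + 1) s)
      \<le> (c / (2 - \<alpha>) * \<tau> powr (-\<alpha>)) * \<tau>\<^sup>2"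
    by (simp add: field_simps)
  also have "\<dots> \<le> (c / (2 - \<alpha>) * \<tau> powr (-\<alpha>)) * (\<tau> * (\<tau> + tau t (k + 1)))"
    using \<tau>_pos c_nonneg alpha_less_1
    by (intro mult_left_mono) (auto simp: power2_eq_square algebra_simps)
  finally have "integral {t (k - 1)..t k} (\<lambda>s. (t k - s) * (t (k + 1) - s) * kern_deriv (k + 1) s)
      \<le> (c / (2 - \<alpha>) * \<tau> powr (-\<alpha>)) * (\<tau> * (\<tau> + tau t (k + 1)))" .
  moreover have "c / (2 - \<alpha>) * \<tau> powr (-\<alpha>)
      = \<alpha> / ((1 - \<alpha>/2) * (2 - \<alpha>)) * (\<tau> powr (-\<alpha>) / Gamma (1 - \<alpha>))"
    unfolding c_def by simp
  moreover have "0 < \<tau> * (\<tau> + tau t (k + 1))" using \<tau>_pos by simp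
  ultimately show ?thesis
    unfolding coeff_diff_local_def \<tau>_def[symmetric] by (simp only: pos_divide_le_eq)
qed

lemma coeff_diff_local_le_diag:
  assumes "1 \<le> k" "k < N"
  shows "coeff_diff_local t (kern_deriv (k + 1)) k \<le> \<alpha>/2 / (1 - \<alpha>) * kern k (t (k - 1))"
proof -
  have Gamma_pos: "0 < Gamma (1 - \<alpha>)" using alpha_less_1 by (intro Gamma_real_pos) simp
  have "tau t k powr (-\<alpha>) \<le> ((1 - \<alpha>/2) * tau t k) powr (-\<alpha>)"
    using tau_pos[of k] assms alpha_pos alpha_less_1
    by (intro powr_mono2') (auto simp: mult_le_cancel_right1)
  then have "tau t k powr (-\<alpha>) / Gamma (1 - \<alpha>) \<le> kern k (t (k - 1))"
    unfolding frac_kernel_def t_sigma_minus_prev using Gamma_pos by (intro divide_right_mono) auto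
  moreover have "0 \<le> tau t k powr (-\<alpha>) / Gamma (1 - \<alpha>)" using Gamma_pos by simp
  ultimately have "\<alpha> / ((1 - \<alpha>/2) * (2 - \<alpha>)) * (tau t k powr (-\<alpha>) / Gamma (1 - \<alpha>))
      \<le> \<alpha>/2 / (1 - \<alpha>) * kern k (t (k - 1))"
    using alpha_pos alpha_less_1
    by (intro mult_mono alpha_coeff_le) auto
  with coeff_diff_local_next_le[OF assms] show ?thesis by linarith
qed

lemma coeff_diff_hist_diff:
  assumes "2 \<le> l" "l \<le> N"
    and "continuous_on {t (l - 3)..t (l - 1)} g1" "continuous_on {t (l - 3)..t (l - 1)} g2"
  shows "coeff_diff_hist t (\<lambda>s. g1 s - g2 s) l = coeff_diff_hist t g1 l - coeff_diff_hist t g2 l"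
proof -
  have "t (l - 3) \<le> t (l - 2)" "t (l - 2) \<le> t (l - 1)" using assms by (auto intro!: mesh_le)
  then have sub: "{t (l - 2)..t (l - 1)} \<subseteq> {t (l - 3)..t (l - 1)}"
      "{t (l - 3)..t (l - 2)} \<subseteq> {t (l - 3)..t (l - 1)}" by auto
  note cont1 = continuous_on_subset[OF assms(3) sub(1)] continuous_on_subset[OF assms(4) sub(1)]
  note cont0 = continuous_on_subset[OF assms(3) sub(2)] continuous_on_subset[OF assms(4) sub(2)]
  show ?thesis
    unfolding coeff_diff_hist_def left_moment_diff[OF cont1] bubble_moment_diff[OF cont1]
      bubble_moment_diff[OF cont0]
    by (simp add: diff_divide_distrib)
qed

lemma coeff_diff_hist_nonneg:
  assumes "2 \<le> l" "l \<le> N" and cont: "continuous_on {t (l - 3)..t (l - 1)} g"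
    and nonneg: "\<And>s. s \<in> {t (l - 3)..t (l - 1)} \<Longrightarrow> 0 \<le> g s"
    and mono: "\<And>x y. x \<in> {t (l - 3)..t (l - 1)} \<Longrightarrow> y \<in> {t (l - 3)..t (l - 1)} \<Longrightarrow> x \<le> y
                 \<Longrightarrow> g x \<le> g y"
  shows "0 \<le> coeff_diff_hist t g l"
proof -
  have le: "t (l - 3) \<le> t (l - 2)" "t (l - 2) \<le> t (l - 1)" using assms by (auto intro!: mesh_le)
  have cont1: "continuous_on {t (l - 2)..t (l - 1)} g" by (rule continuous_on_subset[OF cont]) (use le in auto)
  have cont0: "continuous_on {t (l - 3)..t (l - 2)} g" by (rule continuous_on_subset[OF cont]) (use le in auto)
  have pos: "0 < tau t (l - 1)" "0 < tau t l" using assms by (auto intro!: tau_pos)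
  have Z1: "0 \<le> bubble_moment g (t (l - 2)) (t (l - 1))"
    using cont1 nonneg le by (intro bubble_moment_nonneg) auto
  show ?thesis
  proof (cases "3 \<le> l")
    case False
    have "0 \<le> left_moment g (t (l - 2)) (t (l - 1))"
      using cont1 nonneg le by (intro left_moment_nonneg) auto
    then show ?thesis unfolding coeff_diff_hist_def using False Z1 pos by simp
  next
    case True
    define g0 where "g0 = g (t (l - 2))"
    have g0: "0 \<le> g0" unfolding g0_def using nonneg le by auto
    have tau1: "t (l - 1) - t (l - 2) = tau t (l - 1)" and tau0: "t (l - 2) - t (l - 3) = tau t (l - 2)"
      unfolding tau_def using True by (simp_all add: numeral_2_eq_2 numeral_3_eq_3 diff_diff_add)
    have pos0: "0 < tau t (l - 2)" using assms True by (intro tau_pos) auto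
    have "g0 * tau t (l - 1)^2 / 2 \<le> left_moment g (t (l - 2)) (t (l - 1))"
      unfolding tau1[symmetric] g0_def using le cont1 by (intro left_moment_ge) (auto intro!: mono)
    then have X: "g0 * tau t (l - 1) / 2 \<le> left_moment g (t (l - 2)) (t (l - 1)) / tau t (l - 1)"
      using pos by (simp add: pos_le_divide_eq power2_eq_square)
    have "bubble_moment g (t (l - 3)) (t (l - 2)) \<le> g0 * tau t (l - 2)^3 / 6"
      unfolding tau0[symmetric] g0_def using le cont0 by (intro bubble_moment_le) (auto intro!: mono)
    then have Z0: "bubble_moment g (t (l - 3)) (t (l - 2)) / (tau t (l - 1) * (tau t (l - 2) + tau t (l - 1)))
        \<le> g0 * tau t (l - 2)^3 / 6 / (tau t (l - 1) * (tau t (l - 2) + tau t (l - 1)))"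
      using pos pos0 by (intro divide_right_mono) auto
    have "4/7 * tau t (l - 2) \<le> tau t (l - 1)"
      using tau_ratio[of "l - 1"] assms True by (simp add: numeral_2_eq_2 numeral_3_eq_3)
    then have "g0 * (tau t (l - 2)^3 / (6 * tau t (l - 1) * (tau t (l - 2) + tau t (l - 1))))
        \<le> g0 * (tau t (l - 1) / 2)"
      using cube_le_of_ratio_ge[OF pos0] g0 by (intro mult_left_mono) auto
    then have "g0 * tau t (l - 2)^3 / 6 / (tau t (l - 1) * (tau t (l - 2) + tau t (l - 1)))
        \<le> g0 * tau t (l - 1) / 2"
      by (simp add: mult.assoc)
    moreover have "0 \<le> bubble_moment g (t (l - 2)) (t (l - 1)) / (tau t (l - 1) * tau t l)"
      using Z1 pos by simp
    ultimately show ?thesis unfolding coeff_diff_hist_def if_P[OF True] using X Z0 by linarith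
  qed
qed

lemma hist_part_nonneg:
  assumes "1 \<le> l" "l \<le> n" "n \<le> N"
  shows "0 \<le> hist_part n l"
proof (cases "l = 1")
  case True
  then show ?thesis unfolding hist_part_def using frac_kernel_nonneg alpha_less_1 by simp
next
  case False
  have lt: "t (l - 1) < t_sigma n" using assms by (intro mesh_less_t_sigma) auto
  have "0 \<le> coeff_diff_hist t (kern_deriv n) l"
    using False assms lt alpha_pos alpha_less_1
    by (intro coeff_diff_hist_nonneg continuous_on_frac_kernel_deriv frac_kernel_deriv_nonneg
        frac_kernel_deriv_mono) auto
  then show ?thesis unfolding hist_part_def using False by simp
qed

lemma t_sigma_less_next: "1 \<le> k \<Longrightarrow> k < N \<Longrightarrow> t_sigma k < t_sigma (k + 1)"
  using t_sigma_le[of k] mesh_less_t_sigma[of k "k + 1"] by simp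

lemma hist_part_antimono:
  assumes "1 \<le> l" "l \<le> k" "k < N"
  shows "hist_part (k + 1) l \<le> hist_part k l"
proof (cases "l = 1")
  case True
  have "t 0 < t_sigma k" using assms by (intro mesh_less_t_sigma) auto
  then have "kern (k + 1) (t 0) \<le> kern k (t 0)"
    using assms t_sigma_less_next[of k] alpha_pos alpha_less_1
    by (intro frac_kernel_antimono_time) auto
  then show ?thesis unfolding hist_part_def using True by simp
next
  case False
  have lt: "t (l - 1) < t_sigma k" using assms by (intro mesh_less_t_sigma) auto
  have sig_less: "t_sigma k < t_sigma (k + 1)" using assms by (intro t_sigma_less_next) auto
  have cont: "continuous_on {t (l - 3)..t (l - 1)} (kern_deriv k)"
    "continuous_on {t (l - 3)..t (l - 1)} (kern_deriv (k + 1))"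
    using lt sig_less by (auto intro!: continuous_on_frac_kernel_deriv)
  have "0 \<le> coeff_diff_hist t (\<lambda>s. kern_deriv k s - kern_deriv (k + 1) s) l"
  proof (rule coeff_diff_hist_nonneg)
    show "continuous_on {t (l - 3)..t (l - 1)} (\<lambda>s. kern_deriv k s - kern_deriv (k + 1) s)"
      using cont by (intro continuous_intros)
    show "0 \<le> kern_deriv k s - kern_deriv (k + 1) s" if "s \<in> {t (l - 3)..t (l - 1)}" for s
      using that lt sig_less frac_kernel_deriv_antimono_time[of \<alpha> s "t_sigma k" "t_sigma (k + 1)"]
        alpha_pos alpha_less_1 by auto
    show "kern_deriv k x - kern_deriv (k + 1) x \<le> kern_deriv k y - kern_deriv (k + 1) y"
      if "x \<in> {t (l - 3)..t (l - 1)}" "y \<in> {t (l - 3)..t (l - 1)}" "x \<le> y" for x y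
      using that lt sig_less alpha_pos alpha_less_1 by (intro frac_kernel_deriv_diff_mono) auto
  qed (use False assms in auto)
  moreover have "coeff_diff_hist t (\<lambda>s. kern_deriv k s - kern_deriv (k + 1) s) l
      = coeff_diff_hist t (kern_deriv k) l - coeff_diff_hist t (kern_deriv (k + 1)) l"
    by (rule coeff_diff_hist_diff[OF _ _ cont]) (use False assms in auto)
  ultimately show ?thesis unfolding hist_part_def using False by simp
qed

lemma local_part_nonneg:
  assumes "1 \<le> l" "l \<le> n" "n \<le> N"
  shows "0 \<le> local_part n l"
proof (cases "l < n")
  case True
  have lt: "t l < t_sigma n" using True assms by (intro mesh_less_t_sigma) auto
  have "0 \<le> coeff_diff_local t (kern_deriv n) l"
    using True assms lt alpha_pos alpha_less_1
    by (intro coeff_diff_local_nonneg mesh_le continuous_on_frac_kernel_deriv frac_kernel_deriv_nonneg)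
      auto
  then show ?thesis using local_part_eq[OF assms(1) True assms(3)] by simp
next
  case False
  then have "l = n" using assms by simp
  then show ?thesis
    using local_part_diag[of n] assms frac_kernel_nonneg[of \<alpha>] alpha_pos alpha_less_1 by simp
qed

lemma local_part_antimono:
  assumes "1 \<le> l" "l \<le> k" "k < N"
  shows "local_part (k + 1) l \<le> local_part k l"
proof (cases "l < k")
  case True
  have lt: "t l < t_sigma k" using True assms by (intro mesh_less_t_sigma) auto
  have sig_less: "t_sigma k < t_sigma (k + 1)" using assms by (intro t_sigma_less_next) auto
  have cont: "continuous_on {t (l - 1)..t l} (kern_deriv k)"
    "continuous_on {t (l - 1)..t l} (kern_deriv (k + 1))"
    using lt sig_less by (auto intro!: continuous_on_frac_kernel_deriv)
  have "0 \<le> coeff_diff_local t (\<lambda>s. kern_deriv k s - kern_deriv (k + 1) s) l"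
  proof (rule coeff_diff_local_nonneg)
    show "continuous_on {t (l - 1)..t l} (\<lambda>s. kern_deriv k s - kern_deriv (k + 1) s)"
      using cont by (intro continuous_intros)
    show "0 \<le> kern_deriv k s - kern_deriv (k + 1) s" if "s \<in> {t (l - 1)..t l}" for s
      using that lt sig_less frac_kernel_deriv_antimono_time[of \<alpha> s "t_sigma k" "t_sigma (k + 1)"]
        alpha_pos alpha_less_1 by auto
  qed (use True assms in \<open>auto intro!: mesh_le\<close>)
  then show ?thesis
    using local_part_eq[of l k] local_part_eq[of l "k + 1"] True assms
    unfolding coeff_diff_local_diff[OF cont] by simp
next
  case False
  then have "l = k" using assms by simp
  then show ?thesis
    using local_part_eq[of k "k + 1"] local_part_diag[of k] coeff_diff_local_le_diag[of k] assms
    by simp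
qed

lemma backward_diff_BL2_nonneg:
  "1 \<le> l \<Longrightarrow> l \<le> n \<Longrightarrow> n \<le> N \<Longrightarrow> 0 \<le> backward_diff (BL2 \<alpha> t n) l"
  using backward_diff_BL2 hist_part_nonneg local_part_nonneg by (simp add: add_nonneg_nonneg)

lemma backward_diff_BL2_antimono:
  "1 \<le> l \<Longrightarrow> l \<le> k \<Longrightarrow> k < N
   \<Longrightarrow> backward_diff (BL2 \<alpha> t (k + 1)) l \<le> backward_diff (BL2 \<alpha> t k) l"
  using backward_diff_BL2[of l "k + 1"] backward_diff_BL2[of l k]
    hist_part_antimono[of l k] local_part_antimono[of l k] by simp

end

section \<open>Positivity of the discrete convolution form\<close>

lemma sum_backward_diff: "1 \<le> m \<Longrightarrow> (\<Sum>l=1..m. backward_diff c l) = c m"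
proof (induction m)
  case (Suc m)
  then show ?case
    by (cases "m = 0") (auto simp: sum.cl_ivl_Suc backward_diff_def)
qed simp

lemma sum_backward_diff_mult_tail:
  "(\<Sum>l=1..m. backward_diff c l * (\<Sum>j=l..m. w j)) = (\<Sum>j=1..m. c j * w j)"
proof (induction m)
  case (Suc m)
  have "(\<Sum>l=1..Suc m. backward_diff c l * (\<Sum>j=l..Suc m. w j))
      = (\<Sum>l=1..Suc m. backward_diff c l * (\<Sum>j=l..m. w j) + backward_diff c l * w (Suc m))"
    by (intro sum.cong refl) (auto simp: sum.cl_ivl_Suc algebra_simps)
  also have "\<dots> = (\<Sum>l=1..Suc m. backward_diff c l * (\<Sum>j=l..m. w j))
                  + (\<Sum>l=1..Suc m. backward_diff c l) * w (Suc m)"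
    by (simp only: sum.distrib sum_distrib_right)
  also have "(\<Sum>l=1..Suc m. backward_diff c l * (\<Sum>j=l..m. w j))
      = (\<Sum>l=1..m. backward_diff c l * (\<Sum>j=l..m. w j))"
    by (simp add: sum.cl_ivl_Suc)
  also have "(\<Sum>l=1..Suc m. backward_diff c l) = c (Suc m)" by (rule sum_backward_diff) simp
  finally show ?case using Suc by (simp add: sum.cl_ivl_Suc)
qed simp

lemma sum_backward_diff_tail_square_step:
  "2 * w (Suc m) * (\<Sum>j=1..Suc m. c j * w j)
   = (\<Sum>l=1..Suc m. backward_diff c l * ((\<Sum>j=l..Suc m. w j)^2 - (\<Sum>j=l..m. w j)^2))
     + c (Suc m) * w (Suc m)^2"
proof -
  have "(\<Sum>l=1..Suc m. backward_diff c l * ((\<Sum>j=l..Suc m. w j)^2 - (\<Sum>j=l..m. w j)^2))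
      = (\<Sum>l=1..Suc m. 2 * w (Suc m) * (backward_diff c l * (\<Sum>j=l..Suc m. w j))
                       - w (Suc m)^2 * backward_diff c l)"
  proof (intro sum.cong refl)
    fix l assume "l \<in> {1..Suc m}"
    then have "(\<Sum>j=l..Suc m. w j) = (\<Sum>j=l..m. w j) + w (Suc m)" by (simp add: sum.cl_ivl_Suc)
    then show "backward_diff c l * ((\<Sum>j=l..Suc m. w j)^2 - (\<Sum>j=l..m. w j)^2)
        = 2 * w (Suc m) * (backward_diff c l * (\<Sum>j=l..Suc m. w j)) - w (Suc m)^2 * backward_diff c l"
      by (simp add: power2_eq_square algebra_simps)
  qed
  also have "\<dots> = 2 * w (Suc m) * (\<Sum>l=1..Suc m. backward_diff c l * (\<Sum>j=l..Suc m. w j))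
                  - w (Suc m)^2 * (\<Sum>l=1..Suc m. backward_diff c l)"
    by (simp only: sum_subtractf sum_distrib_left)
  also have "(\<Sum>l=1..Suc m. backward_diff c l * (\<Sum>j=l..Suc m. w j)) = (\<Sum>j=1..Suc m. c j * w j)"
    by (rule sum_backward_diff_mult_tail)
  also have "(\<Sum>l=1..Suc m. backward_diff c l) = c (Suc m)"
    by (rule sum_backward_diff) simp
  finally show ?thesis by simp
qed

text \<open>Induction on \<open>m\<close> with the invariant
  \<open>2 \<Sum>\<^sub>n\<^sub>\<le>\<^sub>m w\<^sub>n \<Sum>\<^sub>j\<^sub>\<le>\<^sub>n c\<^sub>n\<^sub>j w\<^sub>j \<ge> \<Sum>\<^sub>l d\<^sub>m\<^sub>l (w\<^sub>l + \<dots> + w\<^sub>m)\<^sup>2\<close>,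
  where \<open>d\<^sub>m\<^sub>l\<close> are the backward differences of \<open>c\<^sub>m\<close>.\<close>
lemma triangular_form_nonneg:
  fixes c :: "nat \<Rightarrow> nat \<Rightarrow> real" and w :: "nat \<Rightarrow> real"
  assumes nonneg: "\<And>n l. 1 \<le> l \<Longrightarrow> l \<le> n \<Longrightarrow> n \<le> K \<Longrightarrow> 0 \<le> backward_diff (c n) l"
    and antimono: "\<And>k l. 1 \<le> l \<Longrightarrow> l \<le> k \<Longrightarrow> k < K
                     \<Longrightarrow> backward_diff (c (k + 1)) l \<le> backward_diff (c k) l"
  shows "0 \<le> (\<Sum>n=1..K. w n * (\<Sum>j=1..n. c n j * w j))"
proof -
  let ?Q = "\<lambda>m. \<Sum>n=1..m. w n * (\<Sum>j=1..n. c n j * w j)"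
  let ?S = "\<lambda>m. \<Sum>l=1..m. backward_diff (c m) l * (\<Sum>j=l..m. w j)^2"
  have invariant: "?S m \<le> 2 * ?Q m" if "m \<le> K" for m
    using that
  proof (induction m)
    case (Suc m)
    have IH: "?S m \<le> 2 * ?Q m" using Suc by simp
    have "c (Suc m) (Suc m) = (\<Sum>l=1..Suc m. backward_diff (c (Suc m)) l)"
      by (rule sum_backward_diff[symmetric]) simp
    also have "\<dots> \<ge> 0" using nonneg Suc.prems by (intro sum_nonneg) auto
    finally have diag: "0 \<le> c (Suc m) (Suc m) * w (Suc m)^2" by simp
    have "(\<Sum>l=1..Suc m. backward_diff (c (Suc m)) l * (\<Sum>j=l..m. w j)^2)
        = (\<Sum>l=1..m. backward_diff (c (Suc m)) l * (\<Sum>j=l..m. w j)^2)"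
      by (simp add: sum.cl_ivl_Suc)
    also have "\<dots> \<le> ?S m"
      using antimono[of _ m] Suc.prems by (intro sum_mono mult_right_mono) auto
    finally have shrink: "(\<Sum>l=1..Suc m. backward_diff (c (Suc m)) l * (\<Sum>j=l..m. w j)^2) \<le> ?S m" .
    have "2 * ?Q (Suc m) = 2 * ?Q m + 2 * w (Suc m) * (\<Sum>j=1..Suc m. c (Suc m) j * w j)"
      by (simp add: sum.cl_ivl_Suc algebra_simps)
    moreover have "(\<Sum>l=1..Suc m. backward_diff (c (Suc m)) l
                     * ((\<Sum>j=l..Suc m. w j)^2 - (\<Sum>j=l..m. w j)^2))
        = ?S (Suc m) - (\<Sum>l=1..Suc m. backward_diff (c (Suc m)) l * (\<Sum>j=l..m. w j)^2)"
      by (simp add: sum_subtractf right_diff_distrib)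
    ultimately show ?case
      using IH shrink sum_backward_diff_tail_square_step[of w m "c (Suc m)"] diag by linarith
  qed simp
  have "0 \<le> ?S K" using nonneg by (intro sum_nonneg mult_nonneg_nonneg) auto
  with invariant[of K] show ?thesis by simp
qed

lemma (in L2_1sigma_mesh) caputo_L2_form_nonneg:
  assumes "K \<le> N"
  shows "0 \<le> (\<Sum>n=1..K. w n * (\<Sum>j=1..n. BL2 \<alpha> t n j * w j))"
proof (rule triangular_form_nonneg)
  show "0 \<le> backward_diff (BL2 \<alpha> t n) l" if "1 \<le> l" "l \<le> n" "n \<le> K" for n l
    using that assms by (intro backward_diff_BL2_nonneg) auto
  show "backward_diff (BL2 \<alpha> t (k + 1)) l \<le> backward_diff (BL2 \<alpha> t k) l"
    if "1 \<le> l" "l \<le> k" "k < K" for k l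
    using that assms by (intro backward_diff_BL2_antimono) auto
qed

section \<open>Summation by parts on the periodic grid\<close>

definition grid_sum :: "nat \<Rightarrow> grid \<Rightarrow> real" where
  "grid_sum M F = (\<Sum>i\<in>{1..int M}. \<Sum>j\<in>{1..int M}. F i j)"

lemma grid_inner_eq_grid_sum: "grid_inner M h v w = h^2 * grid_sum M (\<lambda>i j. v i j * w i j)"
  unfolding grid_inner_def grid_sum_def ..

lemma grid_sum_add: "grid_sum M (\<lambda>i j. F i j + G i j) = grid_sum M F + grid_sum M G"
  unfolding grid_sum_def by (simp add: sum.distrib)

lemma grid_sum_diff: "grid_sum M (\<lambda>i j. F i j - G i j) = grid_sum M F - grid_sum M G"
  unfolding grid_sum_def by (simp add: sum_subtractf)

lemma grid_sum_cmult: "grid_sum M (\<lambda>i j. c * F i j) = c * grid_sum M F"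
  unfolding grid_sum_def by (simp add: sum_distrib_left)

lemma grid_sum_cong: "(\<And>i j. F i j = G i j) \<Longrightarrow> grid_sum M F = grid_sum M G"
  unfolding grid_sum_def by simp

lemma grid_sum_nonneg: "(\<And>i j. 0 \<le> F i j) \<Longrightarrow> 0 \<le> grid_sum M F"
  unfolding grid_sum_def by (intro sum_nonneg) auto

lemma sum_grid_sum: "(\<Sum>n\<in>A. grid_sum M (F n)) = grid_sum M (\<lambda>i j. \<Sum>n\<in>A. F n i j)"
  unfolding grid_sum_def by (subst sum.swap) (simp add: sum.swap[of _ A])

lemma sum_int_shift_periodic:
  fixes F :: "int \<Rightarrow> real"
  assumes "F (int M + 1) = F 1"
  shows "(\<Sum>i\<in>{1..int M}. F (i + 1)) = (\<Sum>i\<in>{1..int M}. F i)"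
proof -
  have telescope: "(\<Sum>i\<in>{1..int m}. F (i + 1) - F i) = F (int m + 1) - F 1" for m
  proof (induction m)
    case (Suc m)
    have "{1..int (Suc m)} = insert (int m + 1) {1..int m}" by auto
    then show ?case using Suc by simp
  qed simp
  show ?thesis using telescope[of M] assms by (simp add: sum_subtractf)
qed

lemma grid_sum_shift_fst:
  "(\<And>j. F (int M + 1) j = F 1 j) \<Longrightarrow> grid_sum M (\<lambda>i j. F (i + 1) j) = grid_sum M F"
  unfolding grid_sum_def by (rule sum_int_shift_periodic[of "\<lambda>i. \<Sum>j\<in>{1..int M}. F i j"]) simp

lemma grid_sum_shift_snd:
  "(\<And>i. F i (int M + 1) = F i 1) \<Longrightarrow> grid_sum M (\<lambda>i j. F i (j + 1)) = grid_sum M F"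
  unfolding grid_sum_def by (intro sum.cong refl sum_int_shift_periodic) simp

definition grid_grad_form :: "nat \<Rightarrow> grid \<Rightarrow> grid \<Rightarrow> real" where
  "grid_grad_form M u w = grid_sum M (\<lambda>i j. (u (i + 1) j - u i j) * (w (i + 1) j - w i j)
                                            + (u i (j + 1) - u i j) * (w i (j + 1) - w i j))"

lemma grid_grad_sq_eq_form:
  assumes "h \<noteq> 0"
  shows "grid_grad_sq M h v = grid_grad_form M v v"
proof -
  have "grid_grad_sq M h v
      = grid_sum M (\<lambda>i j. h^2 * (((v (i + 1) j - v i j) / h)^2 + ((v i (j + 1) - v i j) / h)^2))"
    unfolding grid_grad_sq_def grid_sum_cmult grid_sum_def ..
  also have "\<dots> = grid_grad_form M v v" unfolding grid_grad_form_def
    by (intro grid_sum_cong) (use assms in \<open>simp add: power2_eq_square field_simps\<close>)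
  finally show ?thesis .
qed

lemma grid_grad_form_nonneg: "0 \<le> grid_grad_form M v v"
  unfolding grid_grad_form_def by (intro grid_sum_nonneg) simp

lemma periodic_grid_gmix: "periodic_grid M a \<Longrightarrow> periodic_grid M b \<Longrightarrow> periodic_grid M (gmix \<sigma> a b)"
  unfolding periodic_grid_def gmix_def by simp

lemma periodic_grid_diff:
  "periodic_grid M a \<Longrightarrow> periodic_grid M b \<Longrightarrow> periodic_grid M (\<lambda>i j. a i j - b i j)"
  unfolding periodic_grid_def by simp

lemma grid_inner_lap:
  assumes u: "periodic_grid M u" and w: "periodic_grid M w" and "h \<noteq> 0"
  shows "grid_inner M h (grid_lap h u) w = - grid_grad_form M u w"
proof -
  have u_per: "u (int M) j = u 0 j" "u i (int M) = u i 0"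
      "u (int M + 1) j = u 1 j" "u i (int M + 1) = u i 1" for i j
    using u unfolding periodic_grid_def by (metis add.commute add_0)+
  have w_per: "w (int M) j = w 0 j" "w i (int M) = w i 0"
      "w (int M + 1) j = w 1 j" "w i (int M + 1) = w i 1" for i j
    using w unfolding periodic_grid_def by (metis add.commute add_0)+
  have shifts:
    "grid_sum M (\<lambda>i j. u i j * w (i + 1) j) = grid_sum M (\<lambda>i j. u (i - 1) j * w i j)"
    "grid_sum M (\<lambda>i j. u i j * w i (j + 1)) = grid_sum M (\<lambda>i j. u i (j - 1) * w i j)"
    "grid_sum M (\<lambda>i j. u (i + 1) j * w (i + 1) j) = grid_sum M (\<lambda>i j. u i j * w i j)"
    "grid_sum M (\<lambda>i j. u i (j + 1) * w i (j + 1)) = grid_sum M (\<lambda>i j. u i j * w i j)"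
    using grid_sum_shift_fst[where M = M and F = "\<lambda>i j. u (i - 1) j * w i j"]
      grid_sum_shift_snd[where M = M and F = "\<lambda>i j. u i (j - 1) * w i j"]
      grid_sum_shift_fst[where M = M and F = "\<lambda>i j. u i j * w i j"]
      grid_sum_shift_snd[where M = M and F = "\<lambda>i j. u i j * w i j"]
      u_per w_per by simp_all
  have "grid_inner M h (grid_lap h u) w
      = grid_sum M (\<lambda>i j. (u (i + 1) j + u (i - 1) j + u i (j + 1) + u i (j - 1) - 4 * u i j) * w i j)"
    unfolding grid_inner_eq_grid_sum grid_sum_cmult[symmetric]
    by (intro grid_sum_cong) (use assms(3) in \<open>simp add: grid_lap_def\<close>)
  also have "\<dots> = grid_sum M (\<lambda>i j. u (i - 1) j * w i j - u i j * w (i + 1) j)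
      + grid_sum M (\<lambda>i j. u i (j - 1) * w i j - u i j * w i (j + 1))
      + grid_sum M (\<lambda>i j. u (i + 1) j * w (i + 1) j - u i j * w i j)
      + grid_sum M (\<lambda>i j. u i (j + 1) * w i (j + 1) - u i j * w i j)
      - grid_grad_form M u w"
    unfolding grid_grad_form_def grid_sum_add[symmetric] grid_sum_diff[symmetric]
    by (intro grid_sum_cong) (simp add: algebra_simps)
  also have "\<dots> = - grid_grad_form M u w"
    unfolding grid_sum_diff shifts by simp
  finally show ?thesis .
qed

lemma grid_grad_form_gmix:
  "grid_grad_form M (gmix \<sigma> a b) (\<lambda>i j. a i j - b i j)
   = (grid_grad_form M a a - grid_grad_form M b b) / 2
     + (1/2 - \<sigma>) * grid_grad_form M (\<lambda>i j. a i j - b i j) (\<lambda>i j. a i j - b i j)"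
proof -
  have "grid_grad_form M (gmix \<sigma> a b) (\<lambda>i j. a i j - b i j)
     = grid_sum M (\<lambda>i j. (1/2) * ((a (i+1) j - a i j) * (a (i+1) j - a i j) + (a i (j+1) - a i j) * (a i (j+1) - a i j))
          - (1/2) * ((b (i+1) j - b i j) * (b (i+1) j - b i j) + (b i (j+1) - b i j) * (b i (j+1) - b i j))
          + (1/2 - \<sigma>) * ((a (i+1) j - b (i+1) j - (a i j - b i j)) * (a (i+1) j - b (i+1) j - (a i j - b i j))
              + (a i (j+1) - b i (j+1) - (a i j - b i j)) * (a i (j+1) - b i (j+1) - (a i j - b i j))))"
    unfolding grid_grad_form_def gmix_def by (intro grid_sum_cong) (simp add: algebra_simps)
  then show ?thesis
    unfolding grid_grad_form_def grid_sum_add grid_sum_diff grid_sum_cmult by (simp add: field_simps)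
qed

section \<open>Energy decay\<close>

lemma sesav_energy_step:
  fixes C F D \<phi> \<phi>' :: grid
  assumes m: "0 < m" and \<tau>: "0 < \<tau>" and h: "h \<noteq> 0" and \<sigma>: "\<sigma> \<le> 1/2"
    and per: "periodic_grid M \<phi>'" "periodic_grid M \<phi>"
    and C_eq: "\<And>i j. C i j = m * (\<epsilon>^2 * grid_lap h (gmix \<sigma> \<phi>' \<phi>) i j + v * F i j - \<kappa> * v * D i j)"
    and R_eq: "(R' - R) / \<tau>
               = v * grid_inner M h (\<lambda>i j. - F i j + \<kappa> * D i j) (\<lambda>i j. (\<phi>' i j - \<phi> i j) / \<tau>)"
  shows "mod_energy M h \<epsilon> \<phi>' R' - mod_energy M h \<epsilon> \<phi> R
         \<le> - grid_inner M h C (\<lambda>i j. \<phi>' i j - \<phi> i j) / m"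
proof -
  define w where "w = (\<lambda>i j. \<phi>' i j - \<phi> i j)"
  define Fw where "Fw = grid_inner M h F w"
  define Dw where "Dw = grid_inner M h D w"
  define B where "B = grid_grad_form M"
  have "grid_inner M h C w
      = h^2 * grid_sum M (\<lambda>i j. (m * \<epsilon>^2) * (grid_lap h (gmix \<sigma> \<phi>' \<phi>) i j * w i j)
                                 + (m * v) * (F i j * w i j) - (m * \<kappa> * v) * (D i j * w i j))"
    unfolding grid_inner_eq_grid_sum C_eq by (simp add: algebra_simps)
  then have C_w: "grid_inner M h C w
      = m * (\<epsilon>^2 * grid_inner M h (grid_lap h (gmix \<sigma> \<phi>' \<phi>)) w + v * Fw - \<kappa> * v * Dw)"
    unfolding Fw_def Dw_def grid_inner_eq_grid_sum grid_sum_add grid_sum_diff grid_sum_cmult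
    by (simp add: algebra_simps)
  have "grid_inner M h (\<lambda>i j. - F i j + \<kappa> * D i j) (\<lambda>i j. w i j / \<tau>)
      = h^2 * grid_sum M (\<lambda>i j. (\<kappa> / \<tau>) * (D i j * w i j) - (1 / \<tau>) * (F i j * w i j))"
    unfolding grid_inner_eq_grid_sum by (simp add: algebra_simps)
  then have "grid_inner M h (\<lambda>i j. - F i j + \<kappa> * D i j) (\<lambda>i j. w i j / \<tau>) = (\<kappa> * Dw - Fw) / \<tau>"
    unfolding Fw_def Dw_def grid_inner_eq_grid_sum grid_sum_diff grid_sum_cmult
    by (simp add: algebra_simps diff_divide_distrib)
  moreover have "R' - R = \<tau> * (v * grid_inner M h (\<lambda>i j. - F i j + \<kappa> * D i j) (\<lambda>i j. w i j / \<tau>))"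
    using R_eq \<tau> unfolding w_def by (simp add: field_simps)
  ultimately have R_diff: "R' - R = v * (\<kappa> * Dw - Fw)"
    using \<tau> by simp
  have lap: "grid_inner M h (grid_lap h (gmix \<sigma> \<phi>' \<phi>)) w
      = - ((B \<phi>' \<phi>' - B \<phi> \<phi>) / 2 + (1/2 - \<sigma>) * B w w)"
    unfolding B_def w_def grid_grad_form_gmix[symmetric]
    using per by (intro grid_inner_lap periodic_grid_gmix periodic_grid_diff h)
  have energy: "mod_energy M h \<epsilon> \<phi>' R' - mod_energy M h \<epsilon> \<phi> R
      = \<epsilon>^2 / 2 * (B \<phi>' \<phi>' - B \<phi> \<phi>) + (R' - R)"
    unfolding mod_energy_def B_def grid_grad_sq_eq_form[OF h] by (simp add: field_simps)
  have "mod_energy M h \<epsilon> \<phi>' R' - mod_energy M h \<epsilon> \<phi> R + grid_inner M h C w / m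
      = - (\<epsilon>^2 * ((1/2 - \<sigma>) * B w w))"
    unfolding energy C_w lap R_diff using m by (simp add: field_simps)
  moreover have "0 \<le> \<epsilon>^2 * ((1/2 - \<sigma>) * B w w)"
    unfolding B_def using \<sigma> grid_grad_form_nonneg by simp
  ultimately show ?thesis unfolding w_def by linarith
qed

lemma energy_le_initial_of_dissipation:
  fixes E Q :: "nat \<Rightarrow> real"
  assumes m: "0 < m" and step: "\<And>k. k \<in> {1..n} \<Longrightarrow> E k - E (k - 1) \<le> - Q k / m"
    and dissipation: "0 \<le> (\<Sum>k=1..n. Q k)"
  shows "E n \<le> E 0"
proof (cases "n = 0")
  case False
  then have "E n - E 0 = (\<Sum>k=0..n - 1. E (Suc k) - E k)"
    by (subst sum_Suc_diff) auto
  also have "\<dots> = (\<Sum>k=1..n. E k - E (k - 1))"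
    using False sum.shift_bounds_cl_Suc_ivl[of "\<lambda>k. E k - E (k - 1)" 0 "n - 1"] by simp
  also have "\<dots> \<le> (\<Sum>k=1..n. - Q k / m)"
    using step by (intro sum_mono) auto
  also have "\<dots> = - (\<Sum>k=1..n. Q k) / m"
    by (simp add: sum_negf sum_divide_distrib)
  also have "\<dots> \<le> 0" using dissipation m by simp
  finally show ?thesis by simp
qed simp

lemma (in L2_1sigma_mesh) sum_grid_inner_caputo_L2_nonneg:
  assumes "n \<le> N"
  shows "0 \<le> (\<Sum>k=1..n. grid_inner M h (caputo_L2 \<alpha> t \<phi> k) (\<lambda>i j. \<phi> k i j - \<phi> (k - 1) i j))"
proof -
  have "(\<Sum>k=1..n. grid_inner M h (caputo_L2 \<alpha> t \<phi> k) (\<lambda>i j. \<phi> k i j - \<phi> (k - 1) i j))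
      = h^2 * grid_sum M (\<lambda>i j. \<Sum>k=1..n. (\<phi> k i j - \<phi> (k - 1) i j)
                                   * (\<Sum>l=1..k. BL2 \<alpha> t k l * (\<phi> l i j - \<phi> (l - 1) i j)))"
    unfolding grid_inner_eq_grid_sum sum_distrib_left[symmetric] sum_grid_sum caputo_L2_def
    by (simp add: mult.commute)
  also have "\<dots> \<ge> 0"
    using caputo_L2_form_nonneg assms by (intro mult_nonneg_nonneg grid_sum_nonneg) auto
  finally show ?thesis .
qed

theorem mainTheorem9:
  fixes nl :: nonlin and L m \<epsilon> \<alpha> \<kappa> K1 K2 :: real and M N :: nat
    and V :: "real \<Rightarrow> real" and t :: "nat \<Rightarrow> real"
    and \<phi> \<phi>hat :: "nat \<Rightarrow> grid" and R :: "nat \<Rightarrow> real"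
  defines "\<beta> \<equiv> nl_beta nl"
      and "\<sigma> \<equiv> \<alpha> / 2"
      and "h \<equiv> L / real M"
  assumes nl: "nl_valid nl"
      and L: "0 < L" and M: "1 \<le> M"
      and m: "0 < m" and eps: "0 < \<epsilon>" and alpha: "0 < \<alpha>" "\<alpha> < 1"
      \<comment> \<open>(A1)\<close>
      and A1: "\<exists>V'. (\<forall>x. (V has_real_derivative V' x) (at x)) \<and> continuous_on UNIV V'
                 \<and> (\<exists>C. \<forall>x y. \<bar>V' x - V' y\<bar> \<le> C * \<bar>x - y\<bar>)
                 \<and> V' 1 = 0 \<and> (\<forall>x. \<bar>V' x\<bar> \<le> K1)"
      and A1b: "V 1 = 1"
      \<comment> \<open>(A2)\<close>
      and A2: "0 < K2" "\<forall>x. 0 \<le> V x \<and> V x \<le> K2"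
      \<comment> \<open>(A3)\<close>
      and A3: "\<forall>z1 z2. \<bar>z1 - 1\<bar> \<le> \<bar>z2 - 1\<bar> \<longrightarrow> \<bar>V z1 - 1\<bar> \<le> \<bar>V z2 - 1\<bar>"
      \<comment> \<open>time grid\<close>
      and N: "1 \<le> N"
      and t0: "t 0 = 0" and tmono: "\<forall>k\<in>{1..N}. t (k - 1) < t k"
      and ratio: "\<forall>k\<in>{2..N}. ratio t k \<ge> 4/7"
      and kappa0: "0 \<le> \<kappa>"
      and kappa: "\<forall>x\<in>{-\<beta>..\<beta>}. \<bar>deriv (nl_f nl) x\<bar> \<le> \<kappa>"
      and tau1: "tau t 1 \<le> min
          ((4 / (11 * \<sigma> * m * (\<kappa> + 4 * \<epsilon>^2 / h^2) * Gamma (2 - \<alpha>))) powr (1 / \<alpha>))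
          ((4 / (11 * \<kappa> * (1 - \<sigma>) * m * Gamma (2 - \<alpha>))) powr (1 / \<alpha>))"
      \<comment> \<open>initial data\<close>
      and phi0: "periodic_grid M (\<phi> 0)" "\<forall>i j. \<bar>\<phi> 0 i j\<bar> \<le> \<beta>"
      \<comment> \<open>all iterates are grid functions\<close>
      and per: "\<forall>n\<in>{1..N}. periodic_grid M (\<phi> n) \<and> periodic_grid M (\<phi>hat n)"
      \<comment> \<open>first predicted solution\<close>
      and hat1: "\<forall>i j. \<bar>\<phi>hat 1 i j\<bar> \<le> \<beta>"
      and hat1eq: "\<forall>i j. BL2 \<alpha> t 1 1 * (\<phi>hat 1 i j - \<phi> 0 i j)
             = m * (\<epsilon>^2 * grid_lap h (gmix \<sigma> (\<phi>hat 1) (\<phi> 0)) i j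
                    + nl_f nl (gmix \<sigma> (\<phi>hat 1) (\<phi> 0) i j))"
      \<comment> \<open>predicted solution for n >= 2\<close>
      and hatn: "\<forall>n\<in>{2..N}. \<forall>i j. \<phi>hat n i j
             = clip \<beta> ((1 + ratio t n) * \<phi> (n - 1) i j - ratio t n * \<phi> (n - 2) i j)"
      \<comment> \<open>well-definedness of the logarithmic terms in the Flory-Huggins case\<close>
      and FHdom: "nl \<noteq> DoubleWell \<longrightarrow>
             (\<forall>n\<in>{1..N}. \<forall>i j. \<bar>gmix \<sigma> (\<phi>hat n) (\<phi> (n - 1)) i j\<bar> < 1)"
      \<comment> \<open>the scheme\<close>
      and phieq: "\<forall>n\<in>{1..N}. \<forall>i j.
             caputo_L2 \<alpha> t \<phi> n i j
             = m * (\<epsilon>^2 * grid_lap h (gmix \<sigma> (\<phi> n) (\<phi> (n - 1))) i j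
                 + V (gh nl M h (gmix \<sigma> (\<phi>hat n) (\<phi> (n - 1))) (R (n - 1)))
                     * nl_f nl (gmix \<sigma> (\<phi>hat n) (\<phi> (n - 1)) i j)
                 - \<kappa> * V (gh nl M h (gmix \<sigma> (\<phi>hat n) (\<phi> (n - 1))) (R (n - 1)))
                     * (gmix \<sigma> (\<phi> n) (\<phi> (n - 1)) i j - gmix \<sigma> (\<phi>hat n) (\<phi> (n - 1)) i j))"
      and Req: "\<forall>n\<in>{1..N}.
             (R n - R (n - 1)) / tau t n
             = V (gh nl M h (gmix \<sigma> (\<phi>hat n) (\<phi> (n - 1))) (R (n - 1)))
               * grid_inner M h
                   (\<lambda>i j. - nl_f nl (gmix \<sigma> (\<phi>hat n) (\<phi> (n - 1)) i j)
                          + \<kappa> * (gmix \<sigma> (\<phi> n) (\<phi> (n - 1)) i j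
                                  - gmix \<sigma> (\<phi>hat n) (\<phi> (n - 1)) i j))
                   (\<lambda>i j. (\<phi> n i j - \<phi> (n - 1) i j) / tau t n)"
  shows "\<forall>n\<in>{1..N}. mod_energy M h \<epsilon> (\<phi> n) (R n) \<le> mod_energy M h \<epsilon> (\<phi> 0) (R 0)"
proof
  interpret L2_1sigma_mesh \<alpha> t N
    using alpha tmono ratio by unfold_locales auto
  have h: "h \<noteq> 0" using L M assms(3) by simp
  have periodic: "periodic_grid M (\<phi> n)" if "n \<le> N" for n
    using phi0(1) per that by (cases "n = 0") auto
  fix n assume n: "n \<in> {1..N}"
  show "mod_energy M h \<epsilon> (\<phi> n) (R n) \<le> mod_energy M h \<epsilon> (\<phi> 0) (R 0)"
  proof (rule energy_le_initial_of_dissipation[OF m,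
        where E = "\<lambda>k. mod_energy M h \<epsilon> (\<phi> k) (R k)"
          and Q = "\<lambda>k. grid_inner M h (caputo_L2 \<alpha> t \<phi> k) (\<lambda>i j. \<phi> k i j - \<phi> (k - 1) i j)"])
    fix k assume k: "k \<in> {1..n}"
    show "mod_energy M h \<epsilon> (\<phi> k) (R k) - mod_energy M h \<epsilon> (\<phi> (k - 1)) (R (k - 1))
        \<le> - grid_inner M h (caputo_L2 \<alpha> t \<phi> k) (\<lambda>i j. \<phi> k i j - \<phi> (k - 1) i j) / m"
    proof (rule sesav_energy_step[where \<tau> = "tau t k", OF m _ h])
      show "\<sigma> \<le> 1/2" using alpha_less_1 assms(2) by simp
    qed (use k n tau_pos periodic phieq Req in auto)
  qed (use n sum_grid_inner_caputo_L2_nonneg in auto)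
qed

end
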